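(* Let $G$ be a finite group and $p$ a prime dividing $|G|$. If $\mathcal{A}_p(G)\subseteq\mathcal{S}_p(G)$ is a strong deformation retract, then both $\mathcal{A}_p(G)'/G$ and $\mathcal{S}_p(G)'/G$ are contractible finite spaces. In particular, this holds when the Sylow $p$-subgroups of $G$ are abelian. Moreover, in the latter case $\mathcal{B}_p(G)\subseteq\mathcal{S}_p(G)$ is a strong deformation retract and $\mathcal{B}_p(G)'/G$ is a contractible finite space.
   Context: $\mathcal{S}_p(G)$ is the poset of non-trivial $p$-subgroups of $G$, $\mathcal{A}_p(G)$ its subposet of non-trivial elementary abelian $p$-subgroups, and $\mathcal{B}_p(G)=\{P\in\mathcal{S}_p(G):P=\mathcal{O}_p(N_G(P))\}$ the $p$-radical subgroups ($\mathcal{O}_p(H)$ = largest normal $p$-subgroup of $H$). $G$ acts by conjugation. Finite posets are finite $T_0$ spaces with open sets the down-sets; contractibility and strong deformation retracts refer to this topology. For a poset $X$, $X'$ is the poset of non-empty chains ordered by inclusion, with $G$ acting componentwise; $X'/G$ is the orbit poset with $\overline{c}\le\overline{d}$ iff some representatives satisfy $c_1\subseteq d_1$. *)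

theory Defs
  imports "HOL-Analysis.Analysis" "HOL-Algebra.Group_Action" "HOL-Algebra.Sylow"
begin

definition poset_topology :: "'a set \<Rightarrow> ('a \<Rightarrow> 'a \<Rightarrow> bool) \<Rightarrow> 'a topology" where
  "poset_topology X rel =
     topology (\<lambda>U. U \<subseteq> X \<and> (\<forall>x\<in>U. \<forall>y\<in>X. rel y x \<longrightarrow> y \<in> U))"

definition strong_deformation_retract :: "'a topology \<Rightarrow> 'a set \<Rightarrow> bool" where
  "strong_deformation_retract T A \<longleftrightarrow>
     A \<subseteq> topspace T \<and>
     (\<exists>r. continuous_map T (subtopology T A) r \<and> (\<forall>x\<in>A. r x = x) \<and>
          homotopic_with (\<lambda>h. \<forall>x\<in>A. h x = x) T T id r)"

definition is_p_subgroup :: "('g, 'b) monoid_scheme \<Rightarrow> nat \<Rightarrow> 'g set \<Rightarrow> bool" where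
  "is_p_subgroup G p H \<longleftrightarrow> subgroup H G \<and> (\<exists>n. card H = p ^ n)"

definition Sp :: "('g, 'b) monoid_scheme \<Rightarrow> nat \<Rightarrow> 'g set set" where
  "Sp G p = {H. is_p_subgroup G p H \<and> H \<noteq> {\<one>\<^bsub>G\<^esub>}}"

definition Ap :: "('g, 'b) monoid_scheme \<Rightarrow> nat \<Rightarrow> 'g set set" where
  "Ap G p = {H \<in> Sp G p. (\<forall>x\<in>H. \<forall>y\<in>H. x \<otimes>\<^bsub>G\<^esub> y = y \<otimes>\<^bsub>G\<^esub> x) \<and>
                         (\<forall>x\<in>H. x [^]\<^bsub>G\<^esub> p = \<one>\<^bsub>G\<^esub>)}"

definition Op :: "('g, 'b) monoid_scheme \<Rightarrow> nat \<Rightarrow> 'g set \<Rightarrow> 'g set" where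
  "Op G p K = (THE Q. is_p_subgroup G p Q \<and> Q \<lhd> (G\<lparr>carrier := K\<rparr>) \<and>
       (\<forall>Q'. is_p_subgroup G p Q' \<and> Q' \<lhd> (G\<lparr>carrier := K\<rparr>) \<longrightarrow> Q' \<subseteq> Q))"

definition Bp :: "('g, 'b) monoid_scheme \<Rightarrow> nat \<Rightarrow> 'g set set" where
  "Bp G p = {P \<in> Sp G p. P = Op G p (normalizer G P)}"

definition conjugate :: "('g, 'b) monoid_scheme \<Rightarrow> 'g \<Rightarrow> 'g set \<Rightarrow> 'g set" where
  "conjugate G g H = g <#\<^bsub>G\<^esub> H #>\<^bsub>G\<^esub> inv\<^bsub>G\<^esub> g"

text \<open>X': non-empty chains of the poset (X, \<subseteq>).\<close>
definition chains_poset :: "'g set set \<Rightarrow> 'g set set set" where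
  "chains_poset X = {c. c \<noteq> {} \<and> c \<subseteq> X \<and> (\<forall>a\<in>c. \<forall>b\<in>c. a \<subseteq> b \<or> b \<subseteq> a)}"

definition chain_act :: "('g, 'b) monoid_scheme \<Rightarrow> 'g \<Rightarrow> 'g set set \<Rightarrow> 'g set set" where
  "chain_act G g c = conjugate G g ` c"

definition orbit_set :: "('g, 'b) monoid_scheme \<Rightarrow> 'g set set \<Rightarrow> 'g set set set set" where
  "orbit_set G X = {{chain_act G g c | g. g \<in> carrier G} | c. c \<in> chains_poset X}"

definition orbit_le :: "'g set set set \<Rightarrow> 'g set set set \<Rightarrow> bool" where
  "orbit_le o1 o2 \<longleftrightarrow> (\<exists>c\<in>o1. \<exists>d\<in>o2. c \<subseteq> d)"

definition orbit_space :: "('g, 'b) monoid_scheme \<Rightarrow> 'g set set \<Rightarrow> 'g set set set topology" where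
  "orbit_space G X = poset_topology (orbit_set G X) orbit_le"

definition subgroup_space :: "'g set set \<Rightarrow> 'g set topology" where
  "subgroup_space X = poset_topology X (\<subseteq>)"

definition sylow_p_subgroup :: "('g, 'b) monoid_scheme \<Rightarrow> nat \<Rightarrow> 'g set \<Rightarrow> bool" where
  "sylow_p_subgroup G p P \<longleftrightarrow> subgroup P G \<and> card P = p ^ multiplicity p (order G)"

end

theory Submission
  imports Defs "HOL-Algebra.Multiplicative_Group"
begin

text \<open>
  Comparable maps between finite spaces are homotopic, so \<open>X'/G\<close> is contracted by a zigzag of
  comparable maps. Shrinking the members of a chain one size at a time by a conjugation-equivariant
  deflation \<open>rho\<close> (\<open>\<Omega>\<^sub>1\<close> or the identity) connects the identity to \<open>rho\<close>. Every chain in the image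
  is conjugate into a fixed \<open>E\<close> (\<open>\<Omega>\<^sub>1\<close> of a Sylow subgroup, or a Sylow subgroup), and because
  \<open>N\<^sub>G(E)\<close> controls fusion inside \<open>E\<close> (a Burnside-type argument), adjoining \<open>E\<close> to such a conjugate
  is well defined on orbits. This cone map lies above \<open>rho\<close> and above the constant map to the
  orbit of \<open>{E}\<close>.

  A strong deformation retraction onto \<open>\<A>\<^sub>p(G)\<close> is monotone and fixes the subgroups of order \<open>p\<close>,
  so the elements of order \<open>p\<close> of any \<open>p\<close>-subgroup commute, and \<open>\<Omega>\<^sub>1\<close> is a subgroup; abelian
  Sylow subgroups give the same. In that case \<open>O\<^sub>p(N\<^sub>G(P))\<close> is the intersection of the Sylow
  subgroups containing \<open>P\<close>, a closure operator retracting \<open>\<S>\<^sub>p(G)\<close> onto \<open>\<B>\<^sub>p(G)\<close>.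
\<close>

section \<open>Finite posets as topological spaces\<close>

lemma istopology_down_sets:
  "istopology (\<lambda>U. U \<subseteq> X \<and> (\<forall>x\<in>U. \<forall>y\<in>X. rel y x \<longrightarrow> y \<in> U))"
  unfolding istopology_def by blast

lemma openin_poset_topology:
  "openin (poset_topology X rel) U \<longleftrightarrow> U \<subseteq> X \<and> (\<forall>x\<in>U. \<forall>y\<in>X. rel y x \<longrightarrow> y \<in> U)"
  unfolding poset_topology_def using topology_inverse'[OF istopology_down_sets[of X rel]] by simp

lemma topspace_poset_topology [simp]: "topspace (poset_topology X rel) = X"
proof -
  have "openin (poset_topology X rel) X" by (simp add: openin_poset_topology)
  then show ?thesis
    using openin_subset unfolding topspace_def by (auto simp: openin_poset_topology)
qed

lemma continuous_map_poset_topologyI: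
  assumes "\<And>x. x \<in> X \<Longrightarrow> f x \<in> Y"
    and "\<And>x y. x \<in> X \<Longrightarrow> y \<in> X \<Longrightarrow> rel x y \<Longrightarrow> rel' (f x) (f y)"
  shows "continuous_map (poset_topology X rel) (poset_topology Y rel') f"
  using assms unfolding continuous_map_def openin_poset_topology by fastforce

lemma continuous_map_poset_topology_mono:
  assumes f: "continuous_map (poset_topology X rel) (poset_topology Y rel') f"
    and refl: "\<And>y. y \<in> Y \<Longrightarrow> rel' y y"
    and trans: "\<And>x y z. x \<in> Y \<Longrightarrow> y \<in> Y \<Longrightarrow> z \<in> Y \<Longrightarrow> rel' x y \<Longrightarrow> rel' y z \<Longrightarrow> rel' x z"
    and ab: "a \<in> X" "b \<in> X" "rel a b"
  shows "rel' (f a) (f b)"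
proof -
  have fX: "f ` X \<subseteq> Y" using f by (auto simp: continuous_map_def)
  let ?U = "{z \<in> Y. rel' z (f b)}"
  have "openin (poset_topology Y rel') ?U"
    unfolding openin_poset_topology using trans fX ab(2) by blast
  then have "openin (poset_topology X rel) {x \<in> X. f x \<in> ?U}"
    using openin_continuous_map_preimage[OF f] by (metis topspace_poset_topology)
  moreover have "b \<in> {x \<in> X. f x \<in> ?U}" using refl fX ab(2) by blast
  ultimately show ?thesis using ab unfolding openin_poset_topology by blast
qed

text \<open>The homotopy is \<open>f\<close> on \<open>[0,1) \<times> X\<close> and \<open>g\<close> on \<open>{1} \<times> X\<close>; it is continuous because
  \<open>f \<le> g\<close> and open sets are down-sets.\<close>

lemma homotopic_with_poset_topology_le:
  assumes fX: "\<And>x. x \<in> X \<Longrightarrow> f x \<in> X" and gX: "\<And>x. x \<in> X \<Longrightarrow> g x \<in> X"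
    and f_mono: "\<And>x y. x \<in> X \<Longrightarrow> y \<in> X \<Longrightarrow> rel x y \<Longrightarrow> rel (f x) (f y)"
    and g_mono: "\<And>x y. x \<in> X \<Longrightarrow> y \<in> X \<Longrightarrow> rel x y \<Longrightarrow> rel (g x) (g y)"
    and le: "\<And>x. x \<in> X \<Longrightarrow> rel (f x) (g x)"
    and P: "P f" "P g"
  shows "homotopic_with P (poset_topology X rel) (poset_topology X rel) f g"
proof -
  let ?T = "poset_topology X rel" and ?I = "top_of_set {0::real..1}"
  define h where "h = (\<lambda>(t::real, x). if t < 1 then f x else g x)"
  have "continuous_map (prod_topology ?I ?T) ?T h"
    unfolding continuous_map_def
  proof (intro conjI allI impI)
    show "h \<in> topspace (prod_topology ?I ?T) \<rightarrow> topspace ?T"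
      using fX gX by (auto simp: h_def)
  next
    fix U assume "openin ?T U"
    then have U: "U \<subseteq> X" "\<And>x y. x \<in> U \<Longrightarrow> y \<in> X \<Longrightarrow> rel y x \<Longrightarrow> y \<in> U"
      by (auto simp: openin_poset_topology)
    let ?A = "{x \<in> X. f x \<in> U}" and ?B = "{x \<in> X. g x \<in> U}"
    have "openin ?T ?A"
      unfolding openin_poset_topology using U(2) f_mono fX by blast
    moreover have "openin ?T ?B"
      unfolding openin_poset_topology using U(2) g_mono gX by blast
    moreover have "openin ?I {0..<1}"
      unfolding openin_open by (rule exI[of _ "{..<1}"]) auto
    ultimately have "openin (prod_topology ?I ?T) ({0..<1} \<times> ?A \<union> {0..1} \<times> ?B)"
      by (intro openin_Un) (auto simp: openin_prod_Times_iff)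
    moreover have "?B \<subseteq> ?A" using U(2) le fX gX by blast
    then have "{z \<in> topspace (prod_topology ?I ?T). h z \<in> U} = {0..<1} \<times> ?A \<union> {0..1} \<times> ?B"
      by (auto simp: h_def split: if_splits)
    ultimately show "openin (prod_topology ?I ?T) {z \<in> topspace (prod_topology ?I ?T). h z \<in> U}"
      by simp
  qed
  moreover have "P (\<lambda>x. h (t, x))" for t
    using P by (cases "t < 1") (simp_all add: h_def)
  ultimately show ?thesis
    unfolding homotopic_with_def by (intro exI[of _ h]) (auto simp: h_def)
qed

context group
begin

lemma inv_mult_cancel_left [simp]: "x \<in> carrier G \<Longrightarrow> y \<in> carrier G \<Longrightarrow> inv x \<otimes> (x \<otimes> y) = y"
  by (simp add: m_assoc[symmetric])

lemma mult_inv_cancel_left [simp]: "x \<in> carrier G \<Longrightarrow> y \<in> carrier G \<Longrightarrow> x \<otimes> (inv x \<otimes> y) = y"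
  by (simp add: m_assoc[symmetric])

lemma conjugate_eq_image: "g \<in> carrier G \<Longrightarrow> conjugate G g H = (\<lambda>h. g \<otimes> h \<otimes> inv g) ` H"
  unfolding conjugate_def l_coset_def r_coset_def by auto

lemma conjugate_subset_carrier:
  "g \<in> carrier G \<Longrightarrow> H \<subseteq> carrier G \<Longrightarrow> conjugate G g H \<subseteq> carrier G"
  by (auto simp: conjugate_eq_image)

lemma conjugate_one [simp]: "H \<subseteq> carrier G \<Longrightarrow> conjugate G \<one> H = H"
  by (auto simp: conjugate_eq_image subsetD)

lemma conjugate_mono: "H \<subseteq> K \<Longrightarrow> conjugate G g H \<subseteq> conjugate G g K"
  unfolding conjugate_def l_coset_def r_coset_def by blast

lemma conjugate_elem_mult:
  "g \<in> carrier G \<Longrightarrow> x \<in> carrier G \<Longrightarrow> y \<in> carrier G \<Longrightarrow>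
     (g \<otimes> x \<otimes> inv g) \<otimes> (g \<otimes> y \<otimes> inv g) = g \<otimes> (x \<otimes> y) \<otimes> inv g"
  by (simp add: m_assoc)

lemma conjugate_elem_eq_one_iff [simp]:
  assumes "g \<in> carrier G" "y \<in> carrier G"
  shows "g \<otimes> y \<otimes> inv g = \<one> \<longleftrightarrow> y = \<one>"
proof
  assume "g \<otimes> y \<otimes> inv g = \<one>"
  then have "inv g \<otimes> (g \<otimes> y \<otimes> inv g) \<otimes> g = \<one>" using assms by simp
  then show "y = \<one>" using assms by (simp add: m_assoc)
qed (use assms in simp)

lemma conjugate_elem_pow:
  "g \<in> carrier G \<Longrightarrow> x \<in> carrier G \<Longrightarrow> (g \<otimes> x \<otimes> inv g) [^] (n::nat) = g \<otimes> (x [^] n) \<otimes> inv g"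
  by (induction n) (simp_all add: conjugate_elem_mult)

lemma conjugate_mult:
  assumes "g \<in> carrier G" "h \<in> carrier G" "H \<subseteq> carrier G"
  shows "conjugate G (g \<otimes> h) H = conjugate G g (conjugate G h H)"
proof -
  have "g \<otimes> h \<otimes> x \<otimes> inv (g \<otimes> h) = g \<otimes> (h \<otimes> x \<otimes> inv h) \<otimes> inv g" if "x \<in> H" for x
    using assms that by (simp add: inv_mult_group m_assoc subsetD)
  then show ?thesis using assms by (auto simp: conjugate_eq_image image_iff)
qed

lemma conjugate_inv_conjugate [simp]:
  "g \<in> carrier G \<Longrightarrow> H \<subseteq> carrier G \<Longrightarrow> conjugate G (inv g) (conjugate G g H) = H"
  by (simp add: conjugate_mult[symmetric])

lemma conjugate_conjugate_inv [simp]: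
  "g \<in> carrier G \<Longrightarrow> H \<subseteq> carrier G \<Longrightarrow> conjugate G g (conjugate G (inv g) H) = H"
  by (simp add: conjugate_mult[symmetric])

lemma card_conjugate: "g \<in> carrier G \<Longrightarrow> H \<subseteq> carrier G \<Longrightarrow> card (conjugate G g H) = card H"
  by (auto simp: conjugate_eq_image inj_on_def subsetD intro: card_image)

lemma subgroup_conjugate:
  assumes g: "g \<in> carrier G" and H: "subgroup H G"
  shows "subgroup (conjugate G g H) G"
proof (rule subgroupI)
  have Hc: "H \<subseteq> carrier G" using H subgroup.subset by blast
  show "conjugate G g H \<subseteq> carrier G" using conjugate_subset_carrier[OF g Hc] .
  show "conjugate G g H \<noteq> {}" using subgroup.one_closed[OF H] g by (auto simp: conjugate_eq_image)
next
  fix a assume "a \<in> conjugate G g H"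
  then obtain h where h: "h \<in> H" "a = g \<otimes> h \<otimes> inv g" using g by (auto simp: conjugate_eq_image)
  then have "inv a = g \<otimes> inv h \<otimes> inv g"
    using g H by (simp add: inv_mult_group m_assoc subgroup.mem_carrier)
  then show "inv a \<in> conjugate G g H" using h H g by (auto simp: conjugate_eq_image subgroup.m_inv_closed)
next
  fix a b assume "a \<in> conjugate G g H" "b \<in> conjugate G g H"
  then obtain h k where "h \<in> H" "a = g \<otimes> h \<otimes> inv g" "k \<in> H" "b = g \<otimes> k \<otimes> inv g"
    using g by (auto simp: conjugate_eq_image)
  then show "a \<otimes> b \<in> conjugate G g H"
    using g H by (auto simp: conjugate_eq_image conjugate_elem_mult subgroup.mem_carrier
        intro!: image_eqI[of _ _ "h \<otimes> k"] subgroup.m_closed)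
qed

end

section \<open>Sylow subgroups\<close>

lemma (in group_action) p_group_fixed_point:
  assumes fin: "finite E" and card: "card (carrier G) = p ^ n" and p: "prime p"
    and not_dvd: "\<not> p dvd card E"
  shows "\<exists>x\<in>E. \<forall>g\<in>carrier G. \<phi> g x = x"
proof (rule ccontr)
  assume no_fix: "\<not> ?thesis"
  have "p dvd card (orbit G \<phi> x)" if x: "x \<in> E" for x
  proof -
    have "card (orbit G \<phi> x) dvd p ^ n"
      using orbit_stabilizer_theorem[OF x] card unfolding order_def by (metis dvd_triv_left)
    then obtain i where i: "card (orbit G \<phi> x) = p ^ i" using divides_primepow_nat[OF p] by blast
    have "i \<noteq> 0"
    proof
      assume "i = 0"
      then have "card (orbit G \<phi> x) = 1" using i by simp
      then obtain y where "orbit G \<phi> x = {y}" by (rule card_1_singletonE)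
      then have "orbit G \<phi> x = {x}" using orbit_refl[OF x] by simp
      then show False using no_fix x unfolding orbit_def by blast
    qed
    then show ?thesis using i by (simp add: dvd_power)
  qed
  then have "p dvd (\<Sum>orb\<in>orbits G E \<phi>. card orb)"
    by (auto simp: orbits_def intro!: dvd_sum)
  also have "(\<Sum>orb\<in>orbits G E \<phi>. card orb) = card E"
  proof -
    have card_sum: "card = (\<lambda>A. \<Sum>x\<in>A. 1::nat)" by (simp add: fun_eq_iff)
    show ?thesis unfolding card_sum by (rule disjoint_sum[OF fin])
  qed
  finally show False using not_dvd by simp
qed

definition rcoset_action :: "('g, 'b) monoid_scheme \<Rightarrow> 'g set \<Rightarrow> 'g \<Rightarrow> 'g set \<Rightarrow> 'g set" where
  "rcoset_action G S = (\<lambda>g. \<lambda>C \<in> rcosets\<^bsub>G\<^esub> S. C #>\<^bsub>G\<^esub> inv\<^bsub>G\<^esub> g)"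

context group
begin

lemma rcosets_closed_rcoset:
  "S \<subseteq> carrier G \<Longrightarrow> C \<in> rcosets S \<Longrightarrow> x \<in> carrier G \<Longrightarrow> C #> x \<in> rcosets S"
  by (auto simp: RCOSETS_def coset_mult_assoc)

lemma group_action_rcoset_action:
  assumes S: "subgroup S G"
  shows "group_action G (rcosets S) (rcoset_action G S)"
proof -
  have Sc: "S \<subseteq> carrier G" using S subgroup.subset by blast
  have C: "C \<subseteq> carrier G" if "C \<in> rcosets S" for C
    using rcosets_subset_PowG[OF S] that by blast
  have bij: "rcoset_action G S g \<in> Bij (rcosets S)" if g: "g \<in> carrier G" for g
  proof -
    have "bij_betw (\<lambda>C. C #> inv g) (rcosets S) (rcosets S)"
      by (rule bij_betw_byWitness[where f' = "\<lambda>C. C #> g"])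
        (use g Sc C in \<open>auto simp: coset_mult_assoc rcosets_closed_rcoset\<close>)
    then show ?thesis unfolding rcoset_action_def Bij_def by (simp add: bij_betw_restrict_eq)
  qed
  have mult: "rcoset_action G S (x \<otimes> y) = compose (rcosets S) (rcoset_action G S x) (rcoset_action G S y)"
    if "x \<in> carrier G" "y \<in> carrier G" for x y
    using that Sc C
    by (auto simp: fun_eq_iff compose_def rcoset_action_def coset_mult_assoc inv_mult_group
        rcosets_closed_rcoset)
  show ?thesis
    unfolding group_action_def group_hom_def group_hom_axioms_def
  proof (intro conjI is_group group_BijGroup homI)
    fix x assume "x \<in> carrier G"
    then show "rcoset_action G S x \<in> carrier (BijGroup (rcosets S))"
      using bij by (simp add: BijGroup_def)
  next
    fix x y assume "x \<in> carrier G" "y \<in> carrier G"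
    then show "rcoset_action G S (x \<otimes> y) = rcoset_action G S x \<otimes>\<^bsub>BijGroup (rcosets S)\<^esub> rcoset_action G S y"
      using bij mult by (simp add: BijGroup_def)
  qed
qed

lemma conjugate_subset_if_rcoset_fixed:
  assumes S: "subgroup S G" and P: "subgroup P G" and a: "a \<in> carrier G"
    and fixed: "\<forall>h\<in>P. rcoset_action G S h (S #> a) = S #> a"
  shows "conjugate G a P \<subseteq> S"
proof
  have Sc: "S \<subseteq> carrier G" using S subgroup.subset by blast
  fix z assume "z \<in> conjugate G a P"
  then obtain x where x: "x \<in> P" "z = a \<otimes> x \<otimes> inv a" using a by (auto simp: conjugate_eq_image)
  have xc: "x \<in> carrier G" using subgroup.mem_carrier[OF P x(1)] .
  have "S #> a #> x = S #> a"
    using fixed subgroup.m_inv_closed[OF P x(1)] xc rcosetsI[OF Sc a]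
    by (force simp: rcoset_action_def)
  then have "a \<otimes> x \<in> S #> a"
    using rcos_self[OF _ S, of "a \<otimes> x"] a xc by (simp add: coset_mult_assoc[OF Sc])
  then obtain s where s: "s \<in> S" "a \<otimes> x = s \<otimes> a" unfolding r_coset_def by blast
  then show "z \<in> S" using x(2) a Sc by (auto simp: m_assoc)
qed

lemma power_dvd_order_iff:
  assumes "prime p" "finite (carrier G)"
  shows "p ^ k dvd order G \<longleftrightarrow> k \<le> multiplicity p (order G)"
  using assms by (intro power_dvd_iff_le_multiplicity)
    (auto simp: order_gt_0_iff_finite[symmetric] not_prime_unit)

lemma card_subgroup_dvd_order: "subgroup H G \<Longrightarrow> card H dvd order G"
  using lagrange by (metis dvd_triv_right)

lemma card_subgroup_dvd_card:
  assumes "subgroup H G" "subgroup K G" "H \<subseteq> K"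
  shows "card H dvd card K"
proof -
  interpret K: group "G\<lparr>carrier := K\<rparr>" using subgroup_imp_group assms(2) .
  have "subgroup H (G\<lparr>carrier := K\<rparr>)" using subgroup_incl assms .
  from K.card_subgroup_dvd_order[OF this] show ?thesis by (simp add: order_def)
qed

lemma is_p_subgroup_subset: "is_p_subgroup G p P \<Longrightarrow> P \<subseteq> carrier G"
  by (simp add: is_p_subgroup_def subgroup.subset)

lemma sylow_p_subgroup_is_p_subgroup: "sylow_p_subgroup G p S \<Longrightarrow> is_p_subgroup G p S"
  unfolding sylow_p_subgroup_def is_p_subgroup_def by blast

lemma is_p_subgroup_subgroup:
  assumes p: "prime p" and K: "is_p_subgroup G p K" and H: "subgroup H G" and HK: "H \<subseteq> K"
  shows "is_p_subgroup G p H"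
proof -
  obtain n where "card K = p ^ n" "subgroup K G" using K by (auto simp: is_p_subgroup_def)
  then have "card H dvd p ^ n" using card_subgroup_dvd_card[OF H _ HK] by simp
  then show ?thesis using divides_primepow_nat[OF p] H by (auto simp: is_p_subgroup_def)
qed

lemma is_p_subgroup_conjugate:
  "g \<in> carrier G \<Longrightarrow> is_p_subgroup G p P \<Longrightarrow> is_p_subgroup G p (conjugate G g P)"
  by (auto simp: is_p_subgroup_def card_conjugate subgroup.subset subgroup_conjugate)

lemma sylow_p_subgroup_conjugate:
  "g \<in> carrier G \<Longrightarrow> sylow_p_subgroup G p S \<Longrightarrow> sylow_p_subgroup G p (conjugate G g S)"
  by (auto simp: sylow_p_subgroup_def card_conjugate subgroup.subset subgroup_conjugate)

lemma card_p_subgroup_le: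
  assumes "prime p" "finite (carrier G)" "is_p_subgroup G p T"
  shows "card T \<le> p ^ multiplicity p (order G)"
proof -
  obtain k where k: "card T = p ^ k" "subgroup T G" using assms(3) by (auto simp: is_p_subgroup_def)
  then have "k \<le> multiplicity p (order G)"
    using card_subgroup_dvd_order power_dvd_order_iff[OF assms(1,2)] by metis
  then show ?thesis using k prime_gt_0_nat[OF assms(1)] by (simp add: power_increasing)
qed

lemma sylow_p_subgroup_exists:
  assumes "prime p" "finite (carrier G)"
  shows "\<exists>S. sylow_p_subgroup G p S"
proof -
  have "order G = p ^ multiplicity p (order G) * (order G div p ^ multiplicity p (order G))"
    by (simp add: multiplicity_dvd)
  from sylow_thm[OF assms(1) is_group this assms(2)] show ?thesis
    unfolding sylow_p_subgroup_def by blast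
qed

lemma sylow_p_subgroup_index_not_dvd:
  assumes p: "prime p" and fin: "finite (carrier G)" and S: "sylow_p_subgroup G p S"
  shows "\<not> p dvd card (rcosets S)"
proof
  assume "p dvd card (rcosets S)"
  then have "p * card S dvd card (rcosets S) * card S"
    by (rule mult_dvd_mono) simp
  then have "p ^ Suc (multiplicity p (order G)) dvd order G"
    using lagrange[of S] S unfolding sylow_p_subgroup_def by (metis power_Suc)
  then show False using power_dvd_order_iff[OF p fin] by (metis Suc_n_not_le_n)
qed

lemma p_subgroup_conjugate_into_sylow:
  assumes p: "prime p" and fin: "finite (carrier G)"
    and S: "sylow_p_subgroup G p S" and P: "is_p_subgroup G p P"
  shows "\<exists>g\<in>carrier G. conjugate G g P \<subseteq> S"
proof -
  have Ssub: "subgroup S G" using S by (simp add: sylow_p_subgroup_def)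
  obtain n where Psub: "subgroup P G" and n: "card P = p ^ n" using P by (auto simp: is_p_subgroup_def)
  interpret P_act: group_action "G\<lparr>carrier := P\<rparr>" "rcosets S" "rcoset_action G S"
    using group_action.induced_action[OF group_action_rcoset_action[OF Ssub] Psub] .
  have "finite (rcosets S)"
    using fin rcosets_subset_PowG[OF Ssub] finite_subset by blast
  from P_act.p_group_fixed_point[OF this _ p sylow_p_subgroup_index_not_dvd[OF p fin S], of n]
  obtain C where C: "C \<in> rcosets S" and fixed: "\<forall>h\<in>P. rcoset_action G S h C = C"
    using n by auto
  then obtain a where "a \<in> carrier G" "C = S #> a" unfolding RCOSETS_def by blast
  then show ?thesis using conjugate_subset_if_rcoset_fixed[OF Ssub Psub] fixed by blast
qed

lemma sylow_p_subgroup_maximal: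
  assumes p: "prime p" and fin: "finite (carrier G)" and S: "sylow_p_subgroup G p S"
    and T: "is_p_subgroup G p T" and ST: "S \<subseteq> T"
  shows "T = S"
proof -
  have "finite T" using finite_subset[OF is_p_subgroup_subset[OF T] fin] .
  moreover have "card T \<le> card S"
    using card_p_subgroup_le[OF p fin T] S by (simp add: sylow_p_subgroup_def)
  ultimately show ?thesis using ST by (metis card_seteq)
qed

lemma sylow_p_subgroup_containing:
  assumes p: "prime p" and fin: "finite (carrier G)" and P: "is_p_subgroup G p P"
  shows "\<exists>S. sylow_p_subgroup G p S \<and> P \<subseteq> S"
proof -
  obtain S where S: "sylow_p_subgroup G p S" using sylow_p_subgroup_exists[OF p fin] by blast
  obtain g where g: "g \<in> carrier G" "conjugate G g P \<subseteq> S"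
    using p_subgroup_conjugate_into_sylow[OF p fin S P] by blast
  have "P \<subseteq> conjugate G (inv g) S"
    using conjugate_mono[OF g(2), of "inv g"] g(1) is_p_subgroup_subset[OF P] by simp
  then show ?thesis using sylow_p_subgroup_conjugate[OF _ S] g(1) by blast
qed

lemma sylow_p_subgroups_conjugate:
  assumes p: "prime p" and fin: "finite (carrier G)"
    and S: "sylow_p_subgroup G p S" and T: "sylow_p_subgroup G p T"
  shows "\<exists>g\<in>carrier G. conjugate G g T = S"
proof -
  obtain g where g: "g \<in> carrier G" "conjugate G g T \<subseteq> S"
    using p_subgroup_conjugate_into_sylow[OF p fin S sylow_p_subgroup_is_p_subgroup[OF T]] by blast
  then show ?thesis
    using sylow_p_subgroup_maximal[OF p fin sylow_p_subgroup_conjugate[OF g(1) T]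
        sylow_p_subgroup_is_p_subgroup[OF S]] by metis
qed

lemma is_p_subgroup_restrict_iff:
  assumes C: "subgroup C G"
  shows "is_p_subgroup (G\<lparr>carrier := C\<rparr>) p T \<longleftrightarrow> is_p_subgroup G p T \<and> T \<subseteq> C"
  using subgroup.subset incl_subgroup[OF C] subgroup_incl[OF _ C]
  unfolding is_p_subgroup_def by fastforce

lemma sylow_p_subgroup_restrict_imp:
  assumes C: "subgroup C G" and T: "sylow_p_subgroup (G\<lparr>carrier := C\<rparr>) p T"
  shows "is_p_subgroup G p T \<and> T \<subseteq> C"
  using T is_p_subgroup_restrict_iff[OF C]
  unfolding sylow_p_subgroup_def is_p_subgroup_def by blast

lemma conjugate_restrict:
  "subgroup C G \<Longrightarrow> g \<in> C \<Longrightarrow> conjugate (G\<lparr>carrier := C\<rparr>) g T = conjugate G g T"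
  by (simp add: conjugate_def l_coset_def r_coset_def m_inv_consistent)

lemma sylow_p_subgroup_restrict_containing:
  assumes p: "prime p" and fin: "finite (carrier G)" and C: "subgroup C G"
    and P: "is_p_subgroup G p P" and PC: "P \<subseteq> C"
  shows "\<exists>T. sylow_p_subgroup (G\<lparr>carrier := C\<rparr>) p T \<and> P \<subseteq> T"
proof -
  interpret C: group "G\<lparr>carrier := C\<rparr>" using subgroup_imp_group[OF C] .
  have "finite (carrier (G\<lparr>carrier := C\<rparr>))"
    using finite_subset[OF subgroup.subset[OF C] fin] by simp
  moreover have "is_p_subgroup (G\<lparr>carrier := C\<rparr>) p P" using is_p_subgroup_restrict_iff[OF C] P PC by simp
  ultimately show ?thesis using C.sylow_p_subgroup_containing[OF p] by blast
qed

lemma sylow_p_subgroups_restrict_conjugate: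
  assumes p: "prime p" and fin: "finite (carrier G)" and C: "subgroup C G"
    and T1: "sylow_p_subgroup (G\<lparr>carrier := C\<rparr>) p T1" and T2: "sylow_p_subgroup (G\<lparr>carrier := C\<rparr>) p T2"
  shows "\<exists>x\<in>C. conjugate G x T1 = T2"
proof -
  interpret C: group "G\<lparr>carrier := C\<rparr>" using subgroup_imp_group[OF C] .
  have "finite (carrier (G\<lparr>carrier := C\<rparr>))"
    using finite_subset[OF subgroup.subset[OF C] fin] by simp
  from C.sylow_p_subgroups_conjugate[OF p this T2 T1] show ?thesis
    using conjugate_restrict[OF C] by auto
qed

lemma sylow_p_subgroup_restrict:
  assumes p: "prime p" and fin: "finite (carrier G)" and C: "subgroup C G"
    and S: "sylow_p_subgroup G p S" and SC: "S \<subseteq> C"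
  shows "sylow_p_subgroup (G\<lparr>carrier := C\<rparr>) p S"
proof -
  have Ss: "subgroup S G" and cS: "card S = p ^ multiplicity p (order G)"
    using S by (auto simp: sylow_p_subgroup_def)
  have CG: "card C dvd order G" using card_subgroup_dvd_order[OF C] .
  then have "card C \<noteq> 0" using fin by (auto simp: order_gt_0_iff_finite[symmetric])
  then have "multiplicity p (order G) \<le> multiplicity p (card C)"
    using multiplicity_geI card_subgroup_dvd_card[OF Ss C SC] cS not_prime_unit[of p] p by metis
  moreover have "multiplicity p (card C) \<le> multiplicity p (order G)"
    using dvd_imp_multiplicity_le[OF CG] fin by (auto simp: order_gt_0_iff_finite[symmetric])
  ultimately show ?thesis
    using cS subgroup_incl[OF Ss C SC] by (simp add: sylow_p_subgroup_def order_def)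
qed

end

section \<open>Centralizers and control of fusion\<close>

definition centralizer :: "('g, 'b) monoid_scheme \<Rightarrow> 'g set \<Rightarrow> 'g set" where
  "centralizer G M = {c \<in> carrier G. \<forall>m\<in>M. c \<otimes>\<^bsub>G\<^esub> m = m \<otimes>\<^bsub>G\<^esub> c}"

context group
begin

lemma subgroup_centralizer:
  assumes M: "M \<subseteq> carrier G"
  shows "subgroup (centralizer G M) G"
proof (rule subgroupI)
  show "centralizer G M \<subseteq> carrier G" "centralizer G M \<noteq> {}"
    using M by (auto simp: centralizer_def intro!: exI[of _ \<one>])
next
  fix a assume "a \<in> centralizer G M"
  then have a: "a \<in> carrier G" "\<And>m. m \<in> M \<Longrightarrow> a \<otimes> m = m \<otimes> a" by (auto simp: centralizer_def)
  have "inv a \<otimes> m = m \<otimes> inv a" if "m \<in> M" for m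
  proof -
    have m: "m \<in> carrier G" using M that by blast
    have "inv a \<otimes> m = inv a \<otimes> (a \<otimes> m) \<otimes> inv a" using a(2)[OF that] a(1) m by (simp add: m_assoc)
    also have "\<dots> = m \<otimes> inv a" using a(1) m by (simp add: m_assoc[symmetric])
    finally show ?thesis .
  qed
  then show "inv a \<in> centralizer G M" using a by (simp add: centralizer_def)
next
  fix a b assume "a \<in> centralizer G M" "b \<in> centralizer G M"
  then have a: "a \<in> carrier G" "\<And>m. m \<in> M \<Longrightarrow> a \<otimes> m = m \<otimes> a"
    and b: "b \<in> carrier G" "\<And>m. m \<in> M \<Longrightarrow> b \<otimes> m = m \<otimes> b" by (auto simp: centralizer_def)
  have "a \<otimes> b \<otimes> m = m \<otimes> (a \<otimes> b)" if "m \<in> M" for m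
  proof -
    have "a \<otimes> b \<otimes> m = a \<otimes> (m \<otimes> b)" using a b M that by (auto simp: m_assoc)
    also have "\<dots> = m \<otimes> (a \<otimes> b)" using a b M that by (auto simp: m_assoc[symmetric])
    finally show ?thesis .
  qed
  then show "a \<otimes> b \<in> centralizer G M" using a b by (simp add: centralizer_def)
qed

lemma conjugate_centralizer_fixes:
  assumes x: "x \<in> centralizer G M" and QM: "Q \<subseteq> M" and M: "M \<subseteq> carrier G"
  shows "conjugate G x Q = Q"
proof -
  have "x \<otimes> q \<otimes> inv x = q" if "q \<in> Q" for q
  proof -
    have "q \<in> carrier G" "x \<otimes> q = q \<otimes> x" using x QM M that by (auto simp: centralizer_def)
    then show ?thesis using x by (simp add: centralizer_def m_assoc)
  qed
  then show ?thesis using x by (force simp: conjugate_eq_image centralizer_def)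
qed

lemma conjugate_inv_subset_centralizer:
  assumes E_comm: "\<forall>x\<in>E. \<forall>y\<in>E. x \<otimes> y = y \<otimes> x" and Ec: "E \<subseteq> carrier G"
    and g: "g \<in> carrier G" and Mc: "M \<subseteq> carrier G" and gM: "conjugate G g M \<subseteq> E"
  shows "conjugate G (inv g) E \<subseteq> centralizer G M"
proof
  fix z assume "z \<in> conjugate G (inv g) E"
  then obtain e where e: "e \<in> E" "z = inv g \<otimes> e \<otimes> g" using g by (auto simp: conjugate_eq_image)
  have "z \<otimes> m = m \<otimes> z" if m: "m \<in> M" for m
  proof -
    define m' where "m' = g \<otimes> m \<otimes> inv g"
    have m': "m' \<in> E" "m = inv g \<otimes> m' \<otimes> g"
      using gM m g Mc by (auto simp: m'_def conjugate_eq_image m_assoc)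
    have em': "e \<in> carrier G" "m' \<in> carrier G" using e m' Ec by auto
    have "z \<otimes> m = inv g \<otimes> (e \<otimes> m') \<otimes> g" using e m' g em' by (simp add: m_assoc)
    also have "\<dots> = inv g \<otimes> (m' \<otimes> e) \<otimes> g" using E_comm e m' by simp
    also have "\<dots> = m \<otimes> z" using e m' g em' by (simp add: m_assoc)
    finally show ?thesis .
  qed
  then show "z \<in> centralizer G M" using e g Ec by (auto simp: centralizer_def)
qed

text \<open>A Burnside-type argument: \<open>E\<close> and \<open>g\<^sup>-\<^sup>1 E g\<close> are \<open>p\<close>-subgroups of \<open>C\<^sub>G(M)\<close>, so some
  \<open>x \<in> C\<^sub>G(M)\<close> conjugates a Sylow subgroup of \<open>C\<^sub>G(M)\<close> over the first onto one over the second.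
  Since \<open>\<Phi>\<close> recovers \<open>E\<close> from every \<open>p\<close>-subgroup containing it, \<open>g x\<close> normalizes \<open>E\<close>,
  and it acts on subsets of \<open>M\<close> as \<open>g\<close> does.\<close>

lemma normalizer_controls_fusion:
  assumes p: "prime p" and fin: "finite (carrier G)"
    and E: "is_p_subgroup G p E" and E_comm: "\<forall>x\<in>E. \<forall>y\<in>E. x \<otimes> y = y \<otimes> x"
    and Phi_conj: "\<And>h T. h \<in> carrier G \<Longrightarrow> is_p_subgroup G p T \<Longrightarrow> Phi (conjugate G h T) = conjugate G h (Phi T)"
    and Phi_E: "\<And>T. is_p_subgroup G p T \<Longrightarrow> E \<subseteq> T \<Longrightarrow> Phi T = E"
    and Phi_carrier: "\<And>T. is_p_subgroup G p T \<Longrightarrow> Phi T \<subseteq> carrier G"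
    and M: "M \<subseteq> E" and g: "g \<in> carrier G" and gM: "conjugate G g M \<subseteq> E"
  shows "\<exists>n\<in>carrier G. conjugate G n E = E \<and> (\<forall>Q. Q \<subseteq> M \<longrightarrow> conjugate G n Q = conjugate G g Q)"
proof -
  have Ec: "E \<subseteq> carrier G" using is_p_subgroup_subset[OF E] .
  have Mc: "M \<subseteq> carrier G" using M Ec by blast
  define C where "C = centralizer G M"
  define E' where "E' = conjugate G (inv g) E"
  have C: "subgroup C G" unfolding C_def using subgroup_centralizer[OF Mc] .
  have E_C: "E \<subseteq> C"
    using conjugate_inv_subset_centralizer[OF E_comm Ec one_closed Mc] M Ec Mc by (simp add: C_def)
  have E'_C: "E' \<subseteq> C"
    unfolding E'_def C_def using conjugate_inv_subset_centralizer[OF E_comm Ec g Mc gM] .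
  have E': "is_p_subgroup G p E'" unfolding E'_def using is_p_subgroup_conjugate[OF _ E] g by simp
  obtain T1 where T1: "sylow_p_subgroup (G\<lparr>carrier := C\<rparr>) p T1" "E \<subseteq> T1"
    using sylow_p_subgroup_restrict_containing[OF p fin C E E_C] by blast
  obtain T2 where T2: "sylow_p_subgroup (G\<lparr>carrier := C\<rparr>) p T2" "E' \<subseteq> T2"
    using sylow_p_subgroup_restrict_containing[OF p fin C E' E'_C] by blast
  obtain x where x: "x \<in> C" "conjugate G x T1 = T2"
    using sylow_p_subgroups_restrict_conjugate[OF p fin C T1(1) T2(1)] by blast
  have xc: "x \<in> carrier G" using x(1) subgroup.subset[OF C] by blast
  have T1p: "is_p_subgroup G p T1" and T2p: "is_p_subgroup G p T2"
    using sylow_p_subgroup_restrict_imp[OF C] T1 T2 by blast+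
  have "E \<subseteq> conjugate G g T2"
    using conjugate_mono[OF T2(2), of g] g Ec by (simp add: E'_def)
  then have "conjugate G g (Phi T2) = E"
    using Phi_E[OF is_p_subgroup_conjugate[OF g T2p]] Phi_conj[OF g T2p] by simp
  then have "Phi T2 = E'" unfolding E'_def using g Phi_carrier[OF T2p] by force
  moreover have "Phi T2 = conjugate G x E" using Phi_conj[OF xc T1p] x(2) Phi_E[OF T1p T1(2)] by simp
  ultimately have "conjugate G (g \<otimes> x) E = E"
    using g xc Ec by (simp add: conjugate_mult E'_def)
  moreover have "conjugate G (g \<otimes> x) Q = conjugate G g Q" if "Q \<subseteq> M" for Q
    using conjugate_mult[OF g xc] conjugate_centralizer_fixes[OF _ that Mc] x(1) that Mc
    by (simp add: C_def subset_trans)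
  ultimately show ?thesis using g xc by blast
qed

end

section \<open>Elements of order \<open>p\<close> and elementary abelian subgroups\<close>

text \<open>\<open>\<Omega>\<^sub>1(P)\<close> as a set. It is the subgroup generated by the elements of order \<open>p\<close> as soon as
  these commute, which is the only case in which it is used.\<close>

definition omega1 :: "('g, 'b) monoid_scheme \<Rightarrow> nat \<Rightarrow> 'g set \<Rightarrow> 'g set" where
  "omega1 G p P = {x \<in> P. x [^]\<^bsub>G\<^esub> p = \<one>\<^bsub>G\<^esub>}"

definition p_elements_commute :: "('g, 'b) monoid_scheme \<Rightarrow> nat \<Rightarrow> 'g set \<Rightarrow> bool" where
  "p_elements_commute G p P \<longleftrightarrow>
     (\<forall>x\<in>P. \<forall>y\<in>P. x [^]\<^bsub>G\<^esub> p = \<one>\<^bsub>G\<^esub> \<longrightarrow> y [^]\<^bsub>G\<^esub> p = \<one>\<^bsub>G\<^esub> \<longrightarrow> x \<otimes>\<^bsub>G\<^esub> y = y \<otimes>\<^bsub>G\<^esub> x)"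

lemma omega1_subset: "omega1 G p P \<subseteq> P"
  unfolding omega1_def by blast

lemma omega1_mono: "P \<subseteq> Q \<Longrightarrow> omega1 G p P \<subseteq> omega1 G p Q"
  unfolding omega1_def by blast

context group
begin

lemma subgroup_omega1:
  assumes P: "subgroup P G" and comm: "p_elements_commute G p P"
  shows "subgroup (omega1 G p P) G"
proof (rule subgroupI)
  show "omega1 G p P \<subseteq> carrier G" "omega1 G p P \<noteq> {}"
    using subgroup.subset[OF P] subgroup.one_closed[OF P] by (auto simp: omega1_def)
next
  fix a assume "a \<in> omega1 G p P"
  then show "inv a \<in> omega1 G p P"
    using P by (auto simp: omega1_def nat_pow_inv subgroup.mem_carrier subgroup.m_inv_closed)
next
  fix a b assume "a \<in> omega1 G p P" "b \<in> omega1 G p P"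
  moreover have "a \<otimes> b = b \<otimes> a" using calculation comm by (auto simp: omega1_def p_elements_commute_def)
  ultimately show "a \<otimes> b \<in> omega1 G p P"
    using P by (auto simp: omega1_def pow_mult_distrib subgroup.mem_carrier subgroup.m_closed)
qed

lemma omega1_conjugate:
  assumes g: "g \<in> carrier G" and Pc: "P \<subseteq> carrier G"
  shows "omega1 G p (conjugate G g P) = conjugate G g (omega1 G p P)"
proof -
  have "(g \<otimes> x \<otimes> inv g) [^] p = \<one> \<longleftrightarrow> x [^] p = \<one>" if "x \<in> P" for x
  proof -
    have x: "x \<in> carrier G" using Pc that by blast
    then show ?thesis using conjugate_elem_pow[OF g x] g by simp
  qed
  then show ?thesis unfolding conjugate_eq_image[OF g] omega1_def by auto
qed

lemma exists_elem_order_p: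
  assumes p: "prime p" and P: "is_p_subgroup G p P" and nontrivial: "P \<noteq> {\<one>}"
  shows "\<exists>y\<in>P. y \<noteq> \<one> \<and> y [^] p = \<one>"
proof -
  obtain n where Ps: "subgroup P G" and n: "card P = p ^ n" using P by (auto simp: is_p_subgroup_def)
  interpret P: group "G\<lparr>carrier := P\<rparr>" using subgroup_imp_group[OF Ps] .
  obtain x where x: "x \<in> P" "x \<noteq> \<one>" using nontrivial subgroup.one_closed[OF Ps] by blast
  have "P.ord x dvd p ^ n" using P.ord_dvd_group_order[of x] x n by (simp add: order_def)
  then obtain k where k: "P.ord x = p ^ k" using divides_primepow_nat[OF p] by blast
  have "k \<noteq> 0" using P.ord_eq_1[of x] x k by auto
  then obtain j where j: "k = Suc j" using not0_implies_Suc by blast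
  define y where "y = x [^]\<^bsub>G\<lparr>carrier := P\<rparr>\<^esub> (p ^ j)"
  have "y \<in> P" using P.nat_pow_closed[of x "p ^ j"] x(1) by (simp add: y_def)
  moreover have "y [^]\<^bsub>G\<lparr>carrier := P\<rparr>\<^esub> p = \<one>"
    using x(1) P.pow_ord_eq_1[of x] k j by (simp add: y_def P.nat_pow_pow mult.commute)
  moreover have "y \<noteq> \<one>"
  proof
    assume "y = \<one>"
    then have "p ^ Suc j dvd p ^ j" using P.pow_eq_id[of x "p ^ j"] x(1) k j by (simp add: y_def)
    then show False using p by (simp add: prime_gt_1_nat)
  qed
  ultimately show ?thesis by (auto simp: nat_pow_consistent[symmetric])
qed

lemma Sp_conjugate:
  assumes g: "g \<in> carrier G" and P: "P \<in> Sp G p"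
  shows "conjugate G g P \<in> Sp G p"
proof -
  have Pp: "is_p_subgroup G p P" and "P \<noteq> {\<one>}" using P by (auto simp: Sp_def)
  moreover have "conjugate G g {\<one>} = {\<one>}" using g by (simp add: conjugate_eq_image)
  ultimately have "conjugate G g P \<noteq> {\<one>}"
    using g is_p_subgroup_subset[OF Pp] by (metis conjugate_inv_conjugate inv_closed one_closed
        empty_subsetI insert_subset)
  then show ?thesis using is_p_subgroup_conjugate[OF g Pp] by (simp add: Sp_def)
qed

lemma Ap_conjugate:
  assumes g: "g \<in> carrier G" and E: "E \<in> Ap G p"
  shows "conjugate G g E \<in> Ap G p"
proof -
  have ES: "E \<in> Sp G p" and comm: "\<forall>x\<in>E. \<forall>y\<in>E. x \<otimes> y = y \<otimes> x"
    and exp: "\<forall>x\<in>E. x [^] p = \<one>" using E by (auto simp: Ap_def)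
  have Ec: "E \<subseteq> carrier G" using ES is_p_subgroup_subset by (auto simp: Sp_def)
  have "x \<otimes> y = y \<otimes> x" if "x \<in> conjugate G g E" "y \<in> conjugate G g E" for x y
    using that g Ec comm by (auto simp: conjugate_eq_image conjugate_elem_mult subsetD)
  moreover have "x [^] p = \<one>" if "x \<in> conjugate G g E" for x
    using that g Ec exp by (auto simp: conjugate_eq_image conjugate_elem_pow subsetD)
  ultimately show ?thesis using Sp_conjugate[OF g ES] by (simp add: Ap_def)
qed

lemma omega1_in_Ap:
  assumes p: "prime p" and P: "P \<in> Sp G p" and comm: "p_elements_commute G p P"
  shows "omega1 G p P \<in> Ap G p"
proof -
  have Pp: "is_p_subgroup G p P" and nt: "P \<noteq> {\<one>}" using P by (auto simp: Sp_def)
  have Ps: "subgroup P G" using Pp by (simp add: is_p_subgroup_def)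
  have "is_p_subgroup G p (omega1 G p P)"
    using is_p_subgroup_subgroup[OF p Pp subgroup_omega1[OF Ps comm] omega1_subset] .
  moreover obtain y where "y \<in> P" "y \<noteq> \<one>" "y [^] p = \<one>" using exists_elem_order_p[OF p Pp nt] by blast
  then have "omega1 G p P \<noteq> {\<one>}" by (auto simp: omega1_def)
  ultimately show ?thesis using comm by (auto simp: Ap_def Sp_def omega1_def p_elements_commute_def)
qed

lemma Ap_subset_omega1: "E \<in> Ap G p \<Longrightarrow> E \<subseteq> P \<Longrightarrow> E \<subseteq> omega1 G p P"
  unfolding Ap_def omega1_def by blast

lemma generate_in_Ap:
  assumes p: "prime p" and x: "x \<in> carrier G" "x \<noteq> \<one>" "x [^] p = \<one>"
  shows "generate G {x} \<in> Ap G p"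
proof -
  have "ord x dvd p" "ord x \<noteq> 1" using pow_eq_id[OF x(1)] ord_eq_1[OF x(1)] x by auto
  then have ord: "ord x = p" using p by (metis prime_nat_iff)
  then have gen: "generate G {x} = {x [^] k | k. k \<in> (UNIV :: nat set)}"
    using generate_pow_nat[OF x(1)] p by (simp add: prime_gt_0_nat)
  have "is_p_subgroup G p (generate G {x})"
    unfolding is_p_subgroup_def using generate_is_subgroup x(1) generate_pow_card[OF x(1)] ord
    by (metis empty_subsetI insert_subset power_one_right)
  moreover have "x \<in> generate G {x}" by (rule generate.incl) simp
  moreover have "(x [^] i) [^] p = \<one>" for i :: nat
  proof -
    have "(x [^] i) [^] p = (x [^] p) [^] i" using x(1) by (simp add: nat_pow_pow mult.commute)
    then show ?thesis using x(3) by simp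
  qed
  moreover have "x [^] i \<otimes> x [^] j = x [^] j \<otimes> x [^] i" for i j :: nat
    using x(1) by (simp add: nat_pow_mult add.commute)
  ultimately show ?thesis using x(2) by (auto simp: Ap_def Sp_def gen)
qed

lemma Ap_sdr_imp_p_elements_commute:
  assumes p: "prime p"
    and sdr: "strong_deformation_retract (subgroup_space (Sp G p)) (Ap G p)"
    and P: "is_p_subgroup G p P"
  shows "p_elements_commute G p P"
  unfolding p_elements_commute_def
proof (intro ballI impI)
  fix x y assume xP: "x \<in> P" and yP: "y \<in> P" and xp: "x [^] p = \<one>" and yp: "y [^] p = \<one>"
  have Ps: "subgroup P G" using P by (simp add: is_p_subgroup_def)
  show "x \<otimes> y = y \<otimes> x"
  proof (cases "x = \<one> \<or> y = \<one>")
    case True then show ?thesis using xP yP Ps by (auto simp: subgroup.mem_carrier)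
  next
    case False
    then have PSp: "P \<in> Sp G p" using P xP by (auto simp: Sp_def)
    obtain r where r: "continuous_map (subgroup_space (Sp G p)) (subtopology (subgroup_space (Sp G p)) (Ap G p)) r"
      and r_id: "\<forall>E\<in>Ap G p. r E = E"
      using sdr unfolding strong_deformation_retract_def by blast
    have rP: "r P \<in> Ap G p"
      using r PSp unfolding continuous_map_def subgroup_space_def by auto
    have r_cont: "continuous_map (poset_topology (Sp G p) (\<subseteq>)) (poset_topology (Sp G p) (\<subseteq>)) r"
      using continuous_map_into_fulltopology[OF r] unfolding subgroup_space_def .
    text \<open>Each element of order \<open>p\<close> of \<open>P\<close> generates a member of \<open>\<A>\<^sub>p(G)\<close> below \<open>P\<close>, which the
      monotone retraction \<open>r\<close> fixes; so all these elements lie in the abelian group \<open>r P\<close>.\<close>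
    have in_rP: "z \<in> r P" if z: "z \<in> P" "z \<noteq> \<one>" "z [^] p = \<one>" for z
    proof -
      have zA: "generate G {z} \<in> Ap G p"
        using generate_in_Ap[OF p _ z(2,3)] subgroup.mem_carrier[OF Ps z(1)] .
      have sub: "generate G {z} \<subseteq> P" using generate_subgroup_incl[OF _ Ps] z(1) by simp
      have zSp: "generate G {z} \<in> Sp G p" using zA by (simp add: Ap_def)
      have "r (generate G {z}) \<subseteq> r P"
        by (rule continuous_map_poset_topology_mono[OF r_cont _ _ zSp PSp sub]) blast+
      then show ?thesis using r_id zA generate.incl[of z "{z}" G] by auto
    qed
    show ?thesis using in_rP[of x] in_rP[of y] xP yP xp yp False rP by (auto simp: Ap_def)
  qed
qed

lemma sylow_p_subgroup_in_Sp:
  assumes p: "prime p" and fin: "finite (carrier G)" and dvd: "p dvd order G"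
    and S: "sylow_p_subgroup G p S"
  shows "S \<in> Sp G p"
proof -
  have "1 \<le> multiplicity p (order G)" using power_dvd_order_iff[OF p fin, of 1] dvd by simp
  then have "p ^ 1 \<le> card S"
    using S power_increasing[OF _ prime_ge_1_nat[OF p]] unfolding sylow_p_subgroup_def by metis
  then have "S \<noteq> {\<one>}" using prime_ge_2_nat[OF p] by auto
  then show ?thesis using sylow_p_subgroup_is_p_subgroup[OF S] by (simp add: Sp_def)
qed

lemma omega1_sylow_p_subgroup_eq:
  assumes p: "prime p" and fin: "finite (carrier G)" and S: "sylow_p_subgroup G p S"
    and T: "is_p_subgroup G p T" and ST: "omega1 G p S \<subseteq> T"
  shows "omega1 G p T = omega1 G p S"
proof -
  obtain S' where S': "sylow_p_subgroup G p S'" "T \<subseteq> S'"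
    using sylow_p_subgroup_containing[OF p fin T] by blast
  obtain h where h: "h \<in> carrier G" "conjugate G h S = S'"
    using sylow_p_subgroups_conjugate[OF p fin S'(1) S] by blast
  have Sc: "S \<subseteq> carrier G" using is_p_subgroup_subset[OF sylow_p_subgroup_is_p_subgroup[OF S]] .
  have fin': "finite (omega1 G p S')"
    using is_p_subgroup_subset[OF sylow_p_subgroup_is_p_subgroup[OF S'(1)]]
    by (intro finite_subset[OF _ fin] subset_trans[OF omega1_subset])
  have "card (omega1 G p S') = card (omega1 G p S)"
    using omega1_conjugate[OF h(1) Sc] h(2) card_conjugate[OF h(1) subset_trans[OF omega1_subset Sc]]
    by simp
  moreover have "omega1 G p S \<subseteq> omega1 G p T" "omega1 G p T \<subseteq> omega1 G p S'"
    using ST omega1_mono[OF S'(2)] by (auto simp: omega1_def)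
  ultimately show ?thesis using card_subset_eq[OF fin'] by (metis subset_antisym subset_trans)
qed

end

section \<open>Orbit posets of chains\<close>

definition chain_orbit :: "('g, 'b) monoid_scheme \<Rightarrow> 'g set set \<Rightarrow> 'g set set set" where
  "chain_orbit G c = {chain_act G g c | g. g \<in> carrier G}"

definition conjugation_closed :: "('g, 'b) monoid_scheme \<Rightarrow> 'g set set \<Rightarrow> bool" where
  "conjugation_closed G X \<longleftrightarrow>
     (\<forall>Q\<in>X. Q \<subseteq> carrier G \<and> Q \<noteq> {}) \<and> (\<forall>g\<in>carrier G. \<forall>Q\<in>X. conjugate G g Q \<in> X)"

definition equivariant_chain_map ::
    "('g, 'b) monoid_scheme \<Rightarrow> 'g set set \<Rightarrow> ('g set set \<Rightarrow> 'g set set) \<Rightarrow> bool" where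
  "equivariant_chain_map G X \<phi> \<longleftrightarrow>
     (\<forall>c\<in>chains_poset X. \<phi> c \<in> chains_poset X) \<and>
     (\<forall>g\<in>carrier G. \<forall>c\<in>chains_poset X. \<phi> (chain_act G g c) = chain_act G g (\<phi> c)) \<and>
     (\<forall>c\<in>chains_poset X. \<forall>d\<in>chains_poset X. c \<subseteq> d \<longrightarrow> \<phi> c \<subseteq> \<phi> d)"

lemma orbit_set_eq_image: "orbit_set G X = chain_orbit G ` chains_poset X"
  unfolding orbit_set_def chain_orbit_def by blast

lemma chains_poset_mono: "Y \<subseteq> X \<Longrightarrow> chains_poset Y \<subseteq> chains_poset X"
  unfolding chains_poset_def by fast

lemma Union_in_chains_poset: "c \<in> chains_poset X \<Longrightarrow> finite c \<Longrightarrow> \<Union>c \<in> c"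
  by (rule Union_in_chain) (auto simp: chains_poset_def subset_chain_def)

lemma chain_act_mono: "c \<subseteq> d \<Longrightarrow> chain_act G g c \<subseteq> chain_act G g d"
  unfolding chain_act_def by (rule image_mono)

context group
begin

lemma conjugation_closedI:
  assumes sub: "\<And>Q. Q \<in> X \<Longrightarrow> subgroup Q G"
    and conj: "\<And>g Q. g \<in> carrier G \<Longrightarrow> Q \<in> X \<Longrightarrow> conjugate G g Q \<in> X"
  shows "conjugation_closed G X"
  unfolding conjugation_closed_def
proof (intro conjI ballI)
  fix Q assume "Q \<in> X"
  then show "Q \<subseteq> carrier G" "Q \<noteq> {}" using sub subgroup.subset subgroup.one_closed by blast+
qed (rule conj)

lemma chain_act_in_chains_poset:
  assumes X: "conjugation_closed G X" and c: "c \<in> chains_poset X" and g: "g \<in> carrier G"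
  shows "chain_act G g c \<in> chains_poset X"
proof -
  have c: "c \<noteq> {}" "c \<subseteq> X" "\<And>A B. A \<in> c \<Longrightarrow> B \<in> c \<Longrightarrow> A \<subseteq> B \<or> B \<subseteq> A"
    using assms by (auto simp: chains_poset_def)
  have "conjugate G g A \<subseteq> conjugate G g B \<or> conjugate G g B \<subseteq> conjugate G g A"
    if "A \<in> c" "B \<in> c" for A B
    using c(3)[OF that] conjugate_mono by metis
  moreover have "conjugate G g Q \<in> X" if "Q \<in> c" for Q
    using X g c(2) that by (auto simp: conjugation_closed_def)
  ultimately show ?thesis using c(1) by (auto simp: chains_poset_def chain_act_def)
qed

lemma chain_act_mult:
  "g \<in> carrier G \<Longrightarrow> h \<in> carrier G \<Longrightarrow> \<forall>Q\<in>c. Q \<subseteq> carrier G \<Longrightarrow>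
     chain_act G (g \<otimes> h) c = chain_act G g (chain_act G h c)"
  unfolding chain_act_def image_comp by (auto simp: conjugate_mult intro!: image_cong)

lemma chain_act_one: "\<forall>Q\<in>c. Q \<subseteq> carrier G \<Longrightarrow> chain_act G \<one> c = c"
  unfolding chain_act_def by simp

lemma chains_poset_subset_carrier:
  "conjugation_closed G X \<Longrightarrow> c \<in> chains_poset X \<Longrightarrow> \<forall>Q\<in>c. Q \<subseteq> carrier G"
  unfolding conjugation_closed_def chains_poset_def by blast

lemma finite_chains_poset:
  "finite (carrier G) \<Longrightarrow> conjugation_closed G X \<Longrightarrow> c \<in> chains_poset X \<Longrightarrow> finite c"
  using chains_poset_subset_carrier[of X c] finite_subset[of c "Pow (carrier G)"] by blast

lemma chain_orbit_self:
  "conjugation_closed G X \<Longrightarrow> c \<in> chains_poset X \<Longrightarrow> c \<in> chain_orbit G c"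
  unfolding chain_orbit_def using chain_act_one[OF chains_poset_subset_carrier] by force

lemma chain_act_in_chain_orbit:
  assumes X: "conjugation_closed G X" and c: "c \<in> chains_poset X"
    and d: "d \<in> chain_orbit G c" and g: "g \<in> carrier G"
  shows "chain_act G g d \<in> chain_orbit G c"
proof -
  obtain h where "h \<in> carrier G" "d = chain_act G h c" using d unfolding chain_orbit_def by blast
  then show ?thesis
    using chain_act_mult[OF g _ chains_poset_subset_carrier[OF X c]] g
    unfolding chain_orbit_def by (metis (mono_tags, lifting) m_closed mem_Collect_eq)
qed

lemma chain_orbit_subset_chains_poset:
  "conjugation_closed G X \<Longrightarrow> c \<in> chains_poset X \<Longrightarrow> chain_orbit G c \<subseteq> chains_poset X"
  using chain_act_in_chains_poset unfolding chain_orbit_def by blast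

lemma chain_orbit_eq:
  assumes X: "conjugation_closed G X" and c: "c \<in> chains_poset X" and d: "d \<in> chain_orbit G c"
  shows "chain_orbit G d = chain_orbit G c"
proof -
  obtain h where h: "h \<in> carrier G" "d = chain_act G h c" using d unfolding chain_orbit_def by blast
  have "c = chain_act G (inv h) d"
    using chain_act_mult[OF inv_closed[OF h(1)] h(1) chains_poset_subset_carrier[OF X c]] h
      chain_act_one[OF chains_poset_subset_carrier[OF X c]] by simp
  then have "c \<in> chain_orbit G d" using h(1) unfolding chain_orbit_def by blast
  moreover have "d \<in> chains_poset X" using chain_orbit_subset_chains_poset[OF X c] d by blast
  ultimately show ?thesis
    using chain_act_in_chain_orbit[OF X c d] chain_act_in_chain_orbit[OF X \<open>d \<in> chains_poset X\<close>]
    unfolding chain_orbit_def[of G d] chain_orbit_def[of G c] by blast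
qed

lemma image_chain_orbit:
  assumes c: "c \<in> chains_poset X"
    and equiv: "\<And>g d. g \<in> carrier G \<Longrightarrow> d \<in> chains_poset X \<Longrightarrow> \<phi> (chain_act G g d) = chain_act G g (\<phi> d)"
  shows "\<phi> ` chain_orbit G c = chain_orbit G (\<phi> c)"
  using equiv[OF _ c] unfolding chain_orbit_def by force

lemma image_in_orbit_set:
  assumes into: "\<And>d. d \<in> chains_poset X \<Longrightarrow> \<phi> d \<in> chains_poset Y"
    and equiv: "\<And>g d. g \<in> carrier G \<Longrightarrow> d \<in> chains_poset X \<Longrightarrow> \<phi> (chain_act G g d) = chain_act G g (\<phi> d)"
    and ob: "ob \<in> orbit_set G X"
  shows "\<phi> ` ob \<in> orbit_set G Y"
  using ob image_chain_orbit[OF _ equiv] into unfolding orbit_set_eq_image by auto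

lemma orbit_le_image:
  assumes X: "conjugation_closed G X"
    and mono: "\<And>c d. c \<in> chains_poset X \<Longrightarrow> d \<in> chains_poset X \<Longrightarrow> c \<subseteq> d \<Longrightarrow> \<phi> c \<subseteq> \<phi> d"
    and ob1: "ob1 \<in> orbit_set G X" and ob2: "ob2 \<in> orbit_set G X" and le: "orbit_le ob1 ob2"
  shows "orbit_le (\<phi> ` ob1) (\<phi> ` ob2)"
proof -
  obtain c d where cd: "c \<in> ob1" "d \<in> ob2" "c \<subseteq> d" using le unfolding orbit_le_def by blast
  have "c \<in> chains_poset X" "d \<in> chains_poset X"
    using ob1 ob2 cd chain_orbit_subset_chains_poset[OF X] unfolding orbit_set_eq_image by blast+
  then show ?thesis using mono cd unfolding orbit_le_def by blast
qed

lemma orbit_le_image_le: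
  assumes X: "conjugation_closed G X" and le: "\<And>c. c \<in> chains_poset X \<Longrightarrow> \<phi> c \<subseteq> \<psi> c"
    and ob: "ob \<in> orbit_set G X"
  shows "orbit_le (\<phi> ` ob) (\<psi> ` ob)"
  using ob chain_orbit_self[OF X] le unfolding orbit_set_eq_image orbit_le_def by blast

lemma orbit_le_refl: "conjugation_closed G X \<Longrightarrow> ob \<in> orbit_set G X \<Longrightarrow> orbit_le ob ob"
  using orbit_le_image_le[of X "\<lambda>c. c" "\<lambda>c. c"] by simp

lemma equivariant_chain_map_orbit_set:
  "equivariant_chain_map G X \<phi> \<Longrightarrow> ob \<in> orbit_set G X \<Longrightarrow> \<phi> ` ob \<in> orbit_set G X"
  by (rule image_in_orbit_set) (auto simp: equivariant_chain_map_def)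

lemma equivariant_chain_map_orbit_le:
  "conjugation_closed G X \<Longrightarrow> equivariant_chain_map G X \<phi> \<Longrightarrow> ob1 \<in> orbit_set G X \<Longrightarrow>
     ob2 \<in> orbit_set G X \<Longrightarrow> orbit_le ob1 ob2 \<Longrightarrow> orbit_le (\<phi> ` ob1) (\<phi> ` ob2)"
  by (rule orbit_le_image) (auto simp: equivariant_chain_map_def)

lemma homotopic_with_orbit_space_le:
  assumes X: "conjugation_closed G X"
    and \<phi>: "equivariant_chain_map G X \<phi>" and \<psi>: "equivariant_chain_map G X \<psi>"
    and le: "\<And>c. c \<in> chains_poset X \<Longrightarrow> \<phi> c \<subseteq> \<psi> c"
  shows "homotopic_with (\<lambda>_. True) (orbit_space G X) (orbit_space G X) (\<lambda>ob. \<phi> ` ob) (\<lambda>ob. \<psi> ` ob)"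
  unfolding orbit_space_def
  by (rule homotopic_with_poset_topology_le)
    (auto intro: equivariant_chain_map_orbit_set[OF \<phi>] equivariant_chain_map_orbit_set[OF \<psi>]
       equivariant_chain_map_orbit_le[OF X \<phi>] equivariant_chain_map_orbit_le[OF X \<psi>]
       orbit_le_image_le[OF X le])

end

section \<open>Contractibility of orbit posets under control of fusion\<close>

locale controlled_fusion = group G for G (structure) +
  fixes X Y :: "'a set set" and rho :: "'a set \<Rightarrow> 'a set" and E :: "'a set"
  assumes finite_carrier: "finite (carrier G)"
    and X: "conjugation_closed G X" and Y: "conjugation_closed G Y" and Y_X: "Y \<subseteq> X"
    and rho_in: "\<And>Q. Q \<in> X \<Longrightarrow> rho Q \<in> Y"
    and rho_le: "\<And>Q. Q \<in> X \<Longrightarrow> rho Q \<subseteq> Q"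
    and rho_mono: "\<And>Q Q'. Q \<in> X \<Longrightarrow> Q' \<in> X \<Longrightarrow> Q \<subseteq> Q' \<Longrightarrow> rho Q \<subseteq> rho Q'"
    and rho_conjugate: "\<And>g Q. g \<in> carrier G \<Longrightarrow> Q \<in> X \<Longrightarrow> rho (conjugate G g Q) = conjugate G g (rho Q)"
    and E: "E \<in> Y"
    and conjugate_into_E: "\<And>Q. Q \<in> Y \<Longrightarrow> \<exists>g\<in>carrier G. conjugate G g Q \<subseteq> E"
    and fusion: "\<And>M g. M \<in> Y \<Longrightarrow> M \<subseteq> E \<Longrightarrow> g \<in> carrier G \<Longrightarrow> conjugate G g M \<subseteq> E \<Longrightarrow>
      \<exists>n\<in>carrier G. conjugate G n E = E \<and> (\<forall>Q. Q \<subseteq> M \<longrightarrow> conjugate G n Q = conjugate G g Q)"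

text \<open>For \<open>a \<le> b \<le> a + 1\<close> this is again a chain, and the inclusions
  \<open>shrink k k \<supseteq> shrink k (k+1) \<subseteq> shrink (k+1) (k+1)\<close> lead from the identity (\<open>k = 0\<close>) to
  \<open>rho\<close> applied to every member (\<open>k > |G|\<close>).\<close>

definition chain_shrink :: "('a set \<Rightarrow> 'a set) \<Rightarrow> nat \<Rightarrow> nat \<Rightarrow> 'a set set \<Rightarrow> 'a set set" where
  "chain_shrink rho a b c = rho ` {Q \<in> c. card Q \<le> a} \<union> {Q \<in> c. b \<le> card Q}"

lemma chain_shrink_mono: "c \<subseteq> d \<Longrightarrow> chain_shrink rho a b c \<subseteq> chain_shrink rho a b d"
  unfolding chain_shrink_def by blast

context controlled_fusion
begin

lemma finite_member: "Q \<in> X \<Longrightarrow> finite Q"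
  using X finite_carrier finite_subset by (auto simp: conjugation_closed_def)

lemma image_rho_in_chains_poset:
  assumes c: "c \<in> chains_poset X"
  shows "rho ` c \<in> chains_poset Y"
  using c rho_in rho_mono unfolding chains_poset_def by (auto 0 3) (meson subsetD)+

lemma chain_shrink_shrunk_subset_kept:
  assumes c: "c \<in> chains_poset X" and ab: "a \<le> b" "b \<le> Suc a"
    and Q: "Q \<in> c" "card Q \<le> a" and Q': "Q' \<in> c" "b \<le> card Q'"
  shows "rho Q \<subseteq> Q'"
proof -
  have cX: "c \<subseteq> X" using c by (simp add: chains_poset_def)
  have "Q \<subseteq> Q'"
  proof (cases "Q' \<subseteq> Q")
    case True
    then have "card Q' \<le> card Q" using card_mono finite_member Q(1) cX by blast
    then have "Q' = Q"
      using True Q Q' ab card_subset_eq[OF finite_member] cX by (metis le_antisym le_trans subsetD)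
    then show ?thesis by simp
  qed (use c Q(1) Q'(1) in \<open>auto simp: chains_poset_def\<close>)
  then show ?thesis using rho_le Q(1) cX by blast
qed

lemma chain_shrink_in_chains_poset:
  assumes c: "c \<in> chains_poset X" and ab: "a \<le> b" "b \<le> Suc a"
  shows "chain_shrink rho a b c \<in> chains_poset X"
proof -
  note below = chain_shrink_shrunk_subset_kept[OF c ab]
  have c: "c \<noteq> {}" "c \<subseteq> X" "\<And>A B. A \<in> c \<Longrightarrow> B \<in> c \<Longrightarrow> A \<subseteq> B \<or> B \<subseteq> A"
    using c by (auto simp: chains_poset_def)
  have rho_comparable: "rho Q \<subseteq> rho Q' \<or> rho Q' \<subseteq> rho Q" if "Q \<in> c" "Q' \<in> c" for Q Q'
    using c(2,3) that rho_mono by (meson subsetD)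
  have "A \<subseteq> B \<or> B \<subseteq> A" if A: "A \<in> chain_shrink rho a b c" and B: "B \<in> chain_shrink rho a b c" for A B
  proof -
    consider (shrunk) Q Q' where "Q \<in> c" "card Q \<le> a" "A = rho Q" "Q' \<in> c" "card Q' \<le> a" "B = rho Q'"
      | (left) Q where "Q \<in> c" "card Q \<le> a" "A = rho Q" "B \<in> c" "b \<le> card B"
      | (right) Q' where "A \<in> c" "b \<le> card A" "Q' \<in> c" "card Q' \<le> a" "B = rho Q'"
      | (kept) "A \<in> c" "B \<in> c"
      using A B unfolding chain_shrink_def by blast
    then show ?thesis
    proof cases
      case (shrunk Q Q')
      then show ?thesis using rho_comparable[of Q Q'] by simp
    next
      case (left Q)
      then show ?thesis using below[of Q B] by simp
    next
      case (right Q')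
      then show ?thesis using below[of Q' A] by simp
    qed (use c(3) in blast)
  qed
  moreover have "chain_shrink rho a b c \<subseteq> X"
    using c(2) rho_in Y_X unfolding chain_shrink_def by blast
  moreover have "chain_shrink rho a b c \<noteq> {}"
    using c(1) ab unfolding chain_shrink_def by fastforce
  ultimately show ?thesis by (auto simp: chains_poset_def)
qed

lemma chain_shrink_chain_act:
  assumes g: "g \<in> carrier G" and c: "c \<in> chains_poset X"
  shows "chain_shrink rho a b (chain_act G g c) = chain_act G g (chain_shrink rho a b c)"
proof -
  have cX: "c \<subseteq> X" using c by (simp add: chains_poset_def)
  have card: "card (conjugate G g Q) = card Q" if "Q \<in> c" for Q
    using card_conjugate[OF g] X cX that by (auto simp: conjugation_closed_def)
  have "{Q \<in> conjugate G g ` c. P (card Q)} = conjugate G g ` {Q \<in> c. P (card Q)}" for P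
  proof -
    have "{Q \<in> conjugate G g ` c. P (card Q)} = conjugate G g ` {Q \<in> c. P (card (conjugate G g Q))}"
      by blast
    then show ?thesis using card by (simp cong: conj_cong)
  qed
  then have "{Q \<in> conjugate G g ` c. card Q \<le> a} = conjugate G g ` {Q \<in> c. card Q \<le> a}"
    "{Q \<in> conjugate G g ` c. b \<le> card Q} = conjugate G g ` {Q \<in> c. b \<le> card Q}"
    by this+
  moreover have "rho ` conjugate G g ` {Q \<in> c. card Q \<le> a} = conjugate G g ` rho ` {Q \<in> c. card Q \<le> a}"
    unfolding image_comp using rho_conjugate[OF g] cX by (auto intro!: image_cong)
  ultimately show ?thesis unfolding chain_shrink_def chain_act_def image_Un by simp
qed

lemma equivariant_chain_map_chain_shrink:
  "a \<le> b \<Longrightarrow> b \<le> Suc a \<Longrightarrow> equivariant_chain_map G X (chain_shrink rho a b)"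
  unfolding equivariant_chain_map_def
  by (simp add: chain_shrink_in_chains_poset chain_shrink_chain_act chain_shrink_mono)

lemma chain_shrink_0: "c \<in> chains_poset X \<Longrightarrow> chain_shrink rho 0 0 c = c"
  using X finite_member unfolding chain_shrink_def chains_poset_def conjugation_closed_def
  by (auto simp: card_gt_0_iff)

lemma chain_shrink_top:
  assumes c: "c \<in> chains_poset X"
  shows "chain_shrink rho (Suc (card (carrier G))) (Suc (card (carrier G))) c = rho ` c"
proof -
  have "card Q \<le> card (carrier G)" if "Q \<in> c" for Q
    using c X that card_mono[OF finite_carrier] by (auto simp: chains_poset_def conjugation_closed_def)
  then have "{Q \<in> c. card Q \<le> Suc (card (carrier G))} = c" "{Q \<in> c. Suc (card (carrier G)) \<le> card Q} = {}"
    by fastforce+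
  then show ?thesis by (simp only: chain_shrink_def Un_empty_right)
qed

lemma equivariant_chain_map_image_rho: "equivariant_chain_map G X ((`) rho)"
  unfolding equivariant_chain_map_def
proof (intro conjI ballI impI)
  fix c assume "c \<in> chains_poset X"
  then show "rho ` c \<in> chains_poset X" using image_rho_in_chains_poset chains_poset_mono[OF Y_X] by blast
next
  fix g c assume g: "g \<in> carrier G" and "c \<in> chains_poset X"
  then show "rho ` chain_act G g c = chain_act G g (rho ` c)"
    unfolding chain_act_def image_comp using rho_conjugate[OF g]
    by (auto simp: chains_poset_def intro!: image_cong)
qed (rule image_mono)

lemma homotopic_id_image_rho:
  "homotopic_with (\<lambda>_. True) (orbit_space G X) (orbit_space G X) id (\<lambda>ob. (`) rho ` ob)"
proof -
  let ?T = "orbit_space G X"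
  let ?h = "\<lambda>a b ob. chain_shrink rho a b ` ob"
  have "homotopic_with (\<lambda>_. True) ?T ?T id (?h k k)" for k
  proof (induction k)
    case 0
    have "homotopic_with (\<lambda>_. True) ?T ?T (\<lambda>ob. (\<lambda>c. c) ` ob) (?h 0 0)"
      by (rule homotopic_with_orbit_space_le[OF X _ equivariant_chain_map_chain_shrink])
        (auto simp: equivariant_chain_map_def chain_shrink_0)
    then show ?case by (simp add: id_def)
  next
    case (Suc k)
    have "homotopic_with (\<lambda>_. True) ?T ?T (?h k (Suc k)) (?h k k)"
      by (rule homotopic_with_orbit_space_le[OF X equivariant_chain_map_chain_shrink
            equivariant_chain_map_chain_shrink]) (auto simp: chain_shrink_def)
    moreover have "homotopic_with (\<lambda>_. True) ?T ?T (?h k (Suc k)) (?h (Suc k) (Suc k))"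
      by (rule homotopic_with_orbit_space_le[OF X equivariant_chain_map_chain_shrink
            equivariant_chain_map_chain_shrink]) (auto simp: chain_shrink_def)
    ultimately show ?case
      using Suc.IH by (meson homotopic_with_symD homotopic_with_trans)
  qed
  moreover have "homotopic_with (\<lambda>_. True) ?T ?T (?h (Suc (card (carrier G))) (Suc (card (carrier G))))
      (\<lambda>ob. (`) rho ` ob)"
    by (rule homotopic_with_orbit_space_le[OF X equivariant_chain_map_chain_shrink
          equivariant_chain_map_image_rho]) (auto simp: chain_shrink_top)
  ultimately show ?thesis by (meson homotopic_with_trans)
qed

lemma chain_conjugate_into_E:
  assumes d: "d \<in> chains_poset Y"
  shows "\<exists>a\<in>carrier G. \<forall>Q\<in>chain_act G a d. Q \<subseteq> E"
proof -
  have "\<Union>d \<in> d" "d \<subseteq> Y"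
    using d Union_in_chains_poset finite_chains_poset[OF finite_carrier Y] by (auto simp: chains_poset_def)
  then obtain a where a: "a \<in> carrier G" "conjugate G a (\<Union>d) \<subseteq> E" using conjugate_into_E by blast
  have "conjugate G a Q \<subseteq> E" if "Q \<in> d" for Q
    using conjugate_mono[of Q "\<Union>d" a] that a(2) by blast
  then show ?thesis using a(1) unfolding chain_act_def by blast
qed

text \<open>Control of fusion makes this a single orbit, whichever representative conjugated into \<open>E\<close> is
  used.\<close>

definition cone_orbit :: "'a set set set \<Rightarrow> 'a set set set" where
  "cone_orbit ob = {chain_act G g (c \<union> {E}) | g c. g \<in> carrier G \<and> c \<in> ob \<and> (\<forall>Q\<in>c. Q \<subseteq> E)}"

lemma insert_E_in_chains_poset: "c \<in> chains_poset Y \<Longrightarrow> \<forall>Q\<in>c. Q \<subseteq> E \<Longrightarrow> c \<union> {E} \<in> chains_poset Y"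
  using E unfolding chains_poset_def by blast

lemma chain_in_cone_orbit:
  assumes ob: "ob \<in> orbit_set G Y" and c: "c \<in> ob" and cE: "\<forall>Q\<in>c. Q \<subseteq> E"
  shows "c \<union> {E} \<in> cone_orbit ob"
proof -
  have "c \<in> chains_poset Y" using ob c chain_orbit_subset_chains_poset[OF Y] by (auto simp: orbit_set_eq_image)
  then have one: "chain_act G \<one> (c \<union> {E}) = c \<union> {E}"
    by (rule chain_act_one[OF chains_poset_subset_carrier[OF Y insert_E_in_chains_poset[OF _ cE]]])
  show ?thesis
    unfolding cone_orbit_def by (intro CollectI exI[of _ \<one>] exI[of _ c]) (use c cE one in simp)
qed

lemma fuse_chains:
  assumes c0: "c0 \<in> chains_poset Y" and c1: "c1 \<in> chain_orbit G c0" and c: "c \<in> chain_orbit G c0"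
    and c1E: "\<forall>Q\<in>c1. Q \<subseteq> E" and cE: "\<forall>Q\<in>c. Q \<subseteq> E"
  shows "\<exists>n\<in>carrier G. chain_act G n (c1 \<union> {E}) = c \<union> {E}"
proof -
  have c1Y: "c1 \<in> chains_poset Y" using chain_orbit_subset_chains_poset[OF Y c0] c1 by blast
  have "c \<in> chain_orbit G c1" using chain_orbit_eq[OF Y c0 c1] c by simp
  then obtain h where h: "h \<in> carrier G" "c = chain_act G h c1" unfolding chain_orbit_def by blast
  let ?m = "\<Union>c1"
  have m: "?m \<in> c1" "?m \<in> Y"
    using Union_in_chains_poset[OF c1Y finite_chains_poset[OF finite_carrier Y c1Y]] c1Y
    by (auto simp: chains_poset_def)
  have "conjugate G h ?m \<subseteq> E" using h(2) m(1) cE unfolding chain_act_def by blast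
  then obtain n where n: "n \<in> carrier G" "conjugate G n E = E"
      "\<And>Q. Q \<subseteq> ?m \<Longrightarrow> conjugate G n Q = conjugate G h Q"
    using fusion[OF m(2) _ h(1)] m(1) c1E by blast
  have "chain_act G n c1 = chain_act G h c1" unfolding chain_act_def using n(3) by (auto intro!: image_cong)
  then have "chain_act G n (c1 \<union> {E}) = c \<union> {E}" using n(2) h(2) by (simp add: chain_act_def)
  then show ?thesis using n(1) by blast
qed

lemma cone_orbit_eq:
  assumes c0: "c0 \<in> chains_poset Y" and c1: "c1 \<in> chain_orbit G c0" and c1E: "\<forall>Q\<in>c1. Q \<subseteq> E"
  shows "cone_orbit (chain_orbit G c0) = chain_orbit G (c1 \<union> {E})"
proof
  have c1E_Y: "c1 \<union> {E} \<in> chains_poset Y"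
    using insert_E_in_chains_poset c1E chain_orbit_subset_chains_poset[OF Y c0] c1 by blast
  show "cone_orbit (chain_orbit G c0) \<subseteq> chain_orbit G (c1 \<union> {E})"
  proof
    fix z assume "z \<in> cone_orbit (chain_orbit G c0)"
    then obtain g c where gc: "g \<in> carrier G" "c \<in> chain_orbit G c0" "\<forall>Q\<in>c. Q \<subseteq> E"
      "z = chain_act G g (c \<union> {E})"
      unfolding cone_orbit_def by blast
    obtain n where n: "n \<in> carrier G" "chain_act G n (c1 \<union> {E}) = c \<union> {E}"
      using fuse_chains[OF c0 c1 gc(2) c1E gc(3)] by blast
    have "z = chain_act G (g \<otimes> n) (c1 \<union> {E})"
      using chain_act_mult[OF gc(1) n(1) chains_poset_subset_carrier[OF Y c1E_Y]] n(2) gc(4) by simp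
    then show "z \<in> chain_orbit G (c1 \<union> {E})" unfolding chain_orbit_def using gc(1) n(1) by blast
  qed
  show "chain_orbit G (c1 \<union> {E}) \<subseteq> cone_orbit (chain_orbit G c0)"
  proof
    fix z assume "z \<in> chain_orbit G (c1 \<union> {E})"
    then obtain g where "g \<in> carrier G" "z = chain_act G g (c1 \<union> {E})" unfolding chain_orbit_def by blast
    then show "z \<in> cone_orbit (chain_orbit G c0)"
      unfolding cone_orbit_def by (intro CollectI exI[of _ g] exI[of _ c1]) (use c1 c1E in simp)
  qed
qed

lemma cone_orbit_in_orbit_set:
  assumes ob: "ob \<in> orbit_set G Y"
  shows "cone_orbit ob \<in> orbit_set G Y" "orbit_le ob (cone_orbit ob)"
    "orbit_le (chain_orbit G {E}) (cone_orbit ob)"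
proof -
  obtain c0 where c0: "c0 \<in> chains_poset Y" "ob = chain_orbit G c0"
    using ob unfolding orbit_set_eq_image by blast
  obtain a where a: "a \<in> carrier G" "\<forall>Q\<in>chain_act G a c0. Q \<subseteq> E"
    using chain_conjugate_into_E[OF c0(1)] by blast
  define c1 where "c1 = chain_act G a c0"
  have c1: "c1 \<in> ob" using a(1) c0(2) unfolding c1_def chain_orbit_def by blast
  have c1E: "\<forall>Q\<in>c1. Q \<subseteq> E" using a(2) unfolding c1_def .
  have c1E_Y: "c1 \<union> {E} \<in> chains_poset Y"
    using insert_E_in_chains_poset c1E chain_orbit_subset_chains_poset[OF Y c0(1)] c1 c0(2) by blast
  show "cone_orbit ob \<in> orbit_set G Y"
    using cone_orbit_eq[OF c0(1) _ c1E] c1 c0(2) c1E_Y unfolding orbit_set_eq_image by auto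
  have top: "c1 \<union> {E} \<in> cone_orbit ob" using chain_in_cone_orbit[OF ob c1 c1E] .
  then show "orbit_le ob (cone_orbit ob)" unfolding orbit_le_def using c1 by blast
  have "{E} \<in> chains_poset Y" using E unfolding chains_poset_def by blast
  then show "orbit_le (chain_orbit G {E}) (cone_orbit ob)"
    unfolding orbit_le_def using chain_orbit_self[OF Y] top by blast
qed

lemma cone_orbit_mono:
  assumes ob1: "ob1 \<in> orbit_set G Y" and ob2: "ob2 \<in> orbit_set G Y" and le: "orbit_le ob1 ob2"
  shows "orbit_le (cone_orbit ob1) (cone_orbit ob2)"
proof -
  obtain c d where cd: "c \<in> ob1" "d \<in> ob2" "c \<subseteq> d" using le unfolding orbit_le_def by blast
  obtain c0 d0 where c0: "c0 \<in> chains_poset Y" "ob1 = chain_orbit G c0"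
    and d0: "d0 \<in> chains_poset Y" "ob2 = chain_orbit G d0"
    using ob1 ob2 unfolding orbit_set_eq_image by blast
  have "d \<in> chains_poset Y" using chain_orbit_subset_chains_poset[OF Y d0(1)] cd(2) d0(2) by blast
  then obtain a where a: "a \<in> carrier G" "\<forall>Q\<in>chain_act G a d. Q \<subseteq> E"
    using chain_conjugate_into_E by blast
  have "chain_act G a c \<in> ob1" "chain_act G a d \<in> ob2"
    using chain_act_in_chain_orbit[OF Y c0(1) _ a(1)] chain_act_in_chain_orbit[OF Y d0(1) _ a(1)]
      cd c0(2) d0(2) by blast+
  moreover have sub: "chain_act G a c \<subseteq> chain_act G a d" using chain_act_mono[OF cd(3)] .
  moreover have "\<forall>Q\<in>chain_act G a c. Q \<subseteq> E" using sub a(2) by blast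
  ultimately have "chain_act G a c \<union> {E} \<in> cone_orbit ob1" "chain_act G a d \<union> {E} \<in> cone_orbit ob2"
    using chain_in_cone_orbit[OF ob1] chain_in_cone_orbit[OF ob2] a(2) by simp_all
  then show ?thesis unfolding orbit_le_def using Un_mono[OF sub subset_refl[of "{E}"]] by blast
qed

theorem contractible_orbit_space: "contractible_space (orbit_space G X)"
proof -
  let ?T = "orbit_space G X"
  let ?R = "\<lambda>ob. (`) rho ` ob"
  let ?K = "chain_orbit G {E}"
  have R_Y: "?R ob \<in> orbit_set G Y" if "ob \<in> orbit_set G X" for ob
    using image_in_orbit_set[OF image_rho_in_chains_poset _ that] equivariant_chain_map_image_rho
    by (auto simp: equivariant_chain_map_def)
  have R_X: "?R ob \<in> orbit_set G X" if "ob \<in> orbit_set G X" for ob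
    using R_Y[OF that] chains_poset_mono[OF Y_X] by (auto simp: orbit_set_eq_image)
  have R_mono: "orbit_le (?R ob1) (?R ob2)"
    if "ob1 \<in> orbit_set G X" "ob2 \<in> orbit_set G X" "orbit_le ob1 ob2" for ob1 ob2
    using equivariant_chain_map_orbit_le[OF X equivariant_chain_map_image_rho that] .
  have cone_X: "cone_orbit ob \<in> orbit_set G X" if "ob \<in> orbit_set G Y" for ob
    using cone_orbit_in_orbit_set(1)[OF that] chains_poset_mono[OF Y_X] by (auto simp: orbit_set_eq_image)
  have "homotopic_with (\<lambda>_. True) ?T ?T ?R (\<lambda>ob. cone_orbit (?R ob))"
    unfolding orbit_space_def
    by (rule homotopic_with_poset_topology_le)
      (auto intro: R_X cone_X R_Y R_mono cone_orbit_mono cone_orbit_in_orbit_set(2))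
  moreover have "homotopic_with (\<lambda>_. True) ?T ?T (\<lambda>ob. ?K) (\<lambda>ob. cone_orbit (?R ob))"
  proof -
    have "{E} \<in> chains_poset X" using E Y_X unfolding chains_poset_def by blast
    then have K: "?K \<in> orbit_set G X" unfolding orbit_set_eq_image by blast
    show ?thesis
      unfolding orbit_space_def
      by (rule homotopic_with_poset_topology_le)
        (use K in \<open>auto intro: cone_X R_Y R_mono cone_orbit_mono cone_orbit_in_orbit_set(3)
          orbit_le_refl[OF X K]\<close>)
  qed
  ultimately have "homotopic_with (\<lambda>_. True) ?T ?T id (\<lambda>ob. ?K)"
    using homotopic_id_image_rho by (meson homotopic_with_symD homotopic_with_trans)
  then show ?thesis unfolding contractible_space_def by blast
qed

end

context group
begin

lemma conjugation_closed_Sp: "conjugation_closed G (Sp G p)"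
  by (rule conjugation_closedI[OF _ Sp_conjugate]) (auto simp: Sp_def is_p_subgroup_def)

lemma conjugation_closed_Ap: "conjugation_closed G (Ap G p)"
  by (rule conjugation_closedI[OF _ Ap_conjugate]) (auto simp: Ap_def Sp_def is_p_subgroup_def)

lemma Ap_subset_Sp: "Ap G p \<subseteq> Sp G p"
  unfolding Ap_def by blast

lemma controlled_fusion_omega1:
  assumes p: "prime p" and fin: "finite (carrier G)" and dvd: "p dvd order G"
    and comm: "\<And>P. is_p_subgroup G p P \<Longrightarrow> p_elements_commute G p P"
    and X: "conjugation_closed G X" "Ap G p \<subseteq> X" "X \<subseteq> Sp G p"
    and S: "sylow_p_subgroup G p S"
  shows "controlled_fusion G X (Ap G p) (omega1 G p) (omega1 G p S)"
proof
  let ?E = "omega1 G p S"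
  have S_p: "is_p_subgroup G p S" using sylow_p_subgroup_is_p_subgroup[OF S] .
  have omega1_Ap: "omega1 G p Q \<in> Ap G p" if "Q \<in> Sp G p" for Q
    using omega1_in_Ap[OF p that comm] that by (simp add: Sp_def)
  show E: "?E \<in> Ap G p" using omega1_Ap sylow_p_subgroup_in_Sp[OF p fin dvd S] .
  show "omega1 G p Q \<in> Ap G p" if "Q \<in> X" for Q using omega1_Ap X(3) that by blast
  show "omega1 G p (conjugate G g Q) = conjugate G g (omega1 G p Q)" if "g \<in> carrier G" "Q \<in> X" for g Q
    using omega1_conjugate[OF that(1)] X(1) that(2) by (simp add: conjugation_closed_def)
  show "\<exists>g\<in>carrier G. conjugate G g Q \<subseteq> ?E" if Q: "Q \<in> Ap G p" for Q
  proof -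
    have "is_p_subgroup G p Q" using Q by (simp add: Ap_def Sp_def)
    then obtain g where "g \<in> carrier G" "conjugate G g Q \<subseteq> S"
      using p_subgroup_conjugate_into_sylow[OF p fin S] by blast
    then show ?thesis using Ap_subset_omega1 Ap_conjugate Q by blast
  qed
  show "\<exists>n\<in>carrier G. conjugate G n ?E = ?E \<and> (\<forall>Q. Q \<subseteq> M \<longrightarrow> conjugate G n Q = conjugate G g Q)"
    if "M \<in> Ap G p" "M \<subseteq> ?E" "g \<in> carrier G" "conjugate G g M \<subseteq> ?E" for M g
  proof (rule normalizer_controls_fusion[OF p fin _ _ _ _ _ that(2-4)])
    show "is_p_subgroup G p ?E" "\<forall>x\<in>?E. \<forall>y\<in>?E. x \<otimes> y = y \<otimes> x"
      using E by (auto simp: Ap_def Sp_def)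
    show "omega1 G p (conjugate G h T) = conjugate G h (omega1 G p T)"
      if "h \<in> carrier G" "is_p_subgroup G p T" for h T
      using omega1_conjugate[OF that(1) is_p_subgroup_subset[OF that(2)]] .
    show "omega1 G p T = ?E" if "is_p_subgroup G p T" "?E \<subseteq> T" for T
      using omega1_sylow_p_subgroup_eq[OF p fin S that] .
    show "omega1 G p T \<subseteq> carrier G" if "is_p_subgroup G p T" for T
      using subset_trans[OF omega1_subset is_p_subgroup_subset[OF that]] .
  qed
qed (use fin X conjugation_closed_Ap in \<open>simp_all add: omega1_subset omega1_mono\<close>)

lemma contractible_orbit_spaces_Ap_Sp:
  assumes p: "prime p" and fin: "finite (carrier G)" and dvd: "p dvd order G"
    and comm: "\<And>P. is_p_subgroup G p P \<Longrightarrow> p_elements_commute G p P"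
  shows "contractible_space (orbit_space G (Ap G p))" "contractible_space (orbit_space G (Sp G p))"
proof -
  obtain S where S: "sylow_p_subgroup G p S" using sylow_p_subgroup_exists[OF p fin] by blast
  show "contractible_space (orbit_space G (Ap G p))"
    using controlled_fusion.contractible_orbit_space[OF
        controlled_fusion_omega1[OF p fin dvd comm conjugation_closed_Ap _ Ap_subset_Sp S]] by simp
  show "contractible_space (orbit_space G (Sp G p))"
    using controlled_fusion.contractible_orbit_space[OF
        controlled_fusion_omega1[OF p fin dvd comm conjugation_closed_Sp Ap_subset_Sp _ S]] by simp
qed

end

section \<open>\<open>p\<close>-radical subgroups when the Sylow subgroups are abelian\<close>

text \<open>For a set contained in no Sylow subgroup this is \<open>\<Inter>{} = UNIV\<close>; it is only used for
  \<open>p\<close>-subgroups.\<close>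

definition sylow_closure :: "('g, 'b) monoid_scheme \<Rightarrow> nat \<Rightarrow> 'g set \<Rightarrow> 'g set" where
  "sylow_closure G p P = \<Inter>{S. sylow_p_subgroup G p S \<and> P \<subseteq> S}"

lemma sylow_closure_subset: "sylow_p_subgroup G p S \<Longrightarrow> P \<subseteq> S \<Longrightarrow> sylow_closure G p P \<subseteq> S"
  unfolding sylow_closure_def by blast

lemma sylow_closure_ge: "P \<subseteq> sylow_closure G p P"
  unfolding sylow_closure_def by blast

lemma sylow_closure_mono: "P \<subseteq> Q \<Longrightarrow> sylow_closure G p P \<subseteq> sylow_closure G p Q"
  unfolding sylow_closure_def by blast

lemma sylow_closure_idem [simp]: "sylow_closure G p (sylow_closure G p P) = sylow_closure G p P"
proof -
  have "{S. sylow_p_subgroup G p S \<and> sylow_closure G p P \<subseteq> S} = {S. sylow_p_subgroup G p S \<and> P \<subseteq> S}"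
    using sylow_closure_subset sylow_closure_ge by (meson order_trans)
  then show ?thesis unfolding sylow_closure_def[of G p "sylow_closure G p P"] by (simp add: sylow_closure_def)
qed

context group
begin

lemma normalizer_iff:
  "P \<subseteq> carrier G \<Longrightarrow> g \<in> normalizer G P \<longleftrightarrow> g \<in> carrier G \<and> conjugate G g P = P"
  unfolding normalizer_def stabilizer_def conjugate_def by auto

lemma normal_restrict_iff:
  assumes N: "subgroup N G"
  shows "Q \<lhd> G\<lparr>carrier := N\<rparr> \<longleftrightarrow> subgroup Q G \<and> Q \<subseteq> N \<and> (\<forall>x\<in>N. \<forall>h\<in>Q. x \<otimes> h \<otimes> inv x \<in> Q)"
proof -
  interpret N: group "G\<lparr>carrier := N\<rparr>" using subgroup_imp_group[OF N] .
  have "subgroup Q (G\<lparr>carrier := N\<rparr>) \<longleftrightarrow> subgroup Q G \<and> Q \<subseteq> N"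
    using subgroup.subset incl_subgroup[OF N] subgroup_incl[OF _ N] by fastforce
  then show ?thesis using N.normal_inv_iff m_inv_consistent[OF N] by auto
qed

lemma is_p_subgroup_sylow_closure:
  assumes p: "prime p" and fin: "finite (carrier G)" and P: "is_p_subgroup G p P"
  shows "is_p_subgroup G p (sylow_closure G p P)"
proof -
  obtain S where S: "sylow_p_subgroup G p S" "P \<subseteq> S" using sylow_p_subgroup_containing[OF p fin P] by blast
  have "subgroup (sylow_closure G p P) G" unfolding sylow_closure_def
    by (rule subgroups_Inter) (use S in \<open>auto simp: sylow_p_subgroup_def\<close>)
  then show ?thesis
    using is_p_subgroup_subgroup[OF p sylow_p_subgroup_is_p_subgroup[OF S(1)] _ sylow_closure_subset[OF S]]
    by blast
qed

lemma conjugate_sylow_closure_subset: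
  assumes g: "g \<in> carrier G" and P: "P \<subseteq> carrier G"
  shows "conjugate G g (sylow_closure G p P) \<subseteq> sylow_closure G p (conjugate G g P)"
  unfolding sylow_closure_def
proof (rule Inter_greatest)
  fix S assume "S \<in> {S. sylow_p_subgroup G p S \<and> conjugate G g P \<subseteq> S}"
  then have S: "sylow_p_subgroup G p S" and gPS: "conjugate G g P \<subseteq> S" by auto
  have Sc: "S \<subseteq> carrier G" using is_p_subgroup_subset[OF sylow_p_subgroup_is_p_subgroup[OF S]] .
  have "P \<subseteq> conjugate G (inv g) S" using conjugate_mono[OF gPS, of "inv g"] g P by simp
  then have "\<Inter>{S. sylow_p_subgroup G p S \<and> P \<subseteq> S} \<subseteq> conjugate G (inv g) S"
    using sylow_p_subgroup_conjugate[OF inv_closed[OF g] S] by blast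
  then show "conjugate G g (\<Inter>{S. sylow_p_subgroup G p S \<and> P \<subseteq> S}) \<subseteq> S"
    using conjugate_mono g Sc by (metis conjugate_conjugate_inv)
qed

lemma sylow_closure_conjugate:
  assumes p: "prime p" and fin: "finite (carrier G)" and g: "g \<in> carrier G" and P: "is_p_subgroup G p P"
  shows "sylow_closure G p (conjugate G g P) = conjugate G g (sylow_closure G p P)"
proof
  have Pc: "P \<subseteq> carrier G" using is_p_subgroup_subset[OF P] .
  show "conjugate G g (sylow_closure G p P) \<subseteq> sylow_closure G p (conjugate G g P)"
    using conjugate_sylow_closure_subset[OF g Pc] .
  have gP: "is_p_subgroup G p (conjugate G g P)" using is_p_subgroup_conjugate[OF g P] .
  have "conjugate G (inv g) (sylow_closure G p (conjugate G g P)) \<subseteq> sylow_closure G p P"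
    using conjugate_sylow_closure_subset[OF inv_closed[OF g] is_p_subgroup_subset[OF gP]] g Pc by simp
  then show "sylow_closure G p (conjugate G g P) \<subseteq> conjugate G g (sylow_closure G p P)"
    using conjugate_mono[of _ _ g] g
      is_p_subgroup_subset[OF is_p_subgroup_sylow_closure[OF p fin gP]]
    by (metis conjugate_conjugate_inv)
qed

end

locale abelian_sylow = group G for G (structure) +
  fixes p :: nat
  assumes prime_p: "prime p" and finite_carrier: "finite (carrier G)"
    and sylow_commute: "\<And>S x y. sylow_p_subgroup G p S \<Longrightarrow> x \<in> S \<Longrightarrow> y \<in> S \<Longrightarrow> x \<otimes> y = y \<otimes> x"
begin

lemma sylow_p_subgroup_subset_normalizer:
  assumes S: "sylow_p_subgroup G p S" and PS: "P \<subseteq> S"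
  shows "S \<subseteq> normalizer G P"
proof
  fix h assume h: "h \<in> S"
  have Sc: "S \<subseteq> carrier G" using is_p_subgroup_subset[OF sylow_p_subgroup_is_p_subgroup[OF S]] .
  have "h \<in> centralizer G P" using Sc h PS sylow_commute[OF S h] by (auto simp: centralizer_def)
  then have "conjugate G h P = P" using conjugate_centralizer_fixes[OF _ subset_refl] PS Sc by blast
  then show "h \<in> normalizer G P" using normalizer_iff PS Sc h by blast
qed

lemma sylow_closure_subset_normalizer:
  assumes P: "is_p_subgroup G p P"
  shows "sylow_closure G p P \<subseteq> normalizer G P"
proof -
  obtain S where "sylow_p_subgroup G p S" "P \<subseteq> S"
    using sylow_p_subgroup_containing[OF prime_p finite_carrier P] by blast
  then show ?thesis using sylow_closure_subset sylow_p_subgroup_subset_normalizer by (metis order_trans)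
qed

lemma normal_sylow_closure:
  assumes P: "is_p_subgroup G p P"
  shows "sylow_closure G p P \<lhd> G\<lparr>carrier := normalizer G P\<rparr>"
proof -
  have Pc: "P \<subseteq> carrier G" using is_p_subgroup_subset[OF P] .
  have "x \<otimes> h \<otimes> inv x \<in> sylow_closure G p P"
    if x: "x \<in> normalizer G P" and h: "h \<in> sylow_closure G p P" for x h
  proof -
    have "x \<in> carrier G" "conjugate G x P = P" using x normalizer_iff[OF Pc] by auto
    then show ?thesis
      using conjugate_sylow_closure_subset[OF _ Pc] h by (force simp: conjugate_eq_image)
  qed
  then show ?thesis
    using normal_restrict_iff[OF normalizer_imp_subgroup[OF Pc]]
      is_p_subgroup_sylow_closure[OF prime_p finite_carrier P]
      sylow_closure_subset_normalizer[OF P]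
    by (simp add: is_p_subgroup_def)
qed

text \<open>A normal \<open>p\<close>-subgroup of \<open>N\<^sub>G(P)\<close> lies in every Sylow subgroup of \<open>N\<^sub>G(P)\<close>; with abelian
  Sylow subgroups these include every Sylow subgroup of \<open>G\<close> containing \<open>P\<close>.\<close>

lemma normal_p_subgroup_subset_sylow_closure:
  assumes P: "is_p_subgroup G p P" and Q: "is_p_subgroup G p Q"
    and Q_normal: "Q \<lhd> G\<lparr>carrier := normalizer G P\<rparr>"
  shows "Q \<subseteq> sylow_closure G p P"
  unfolding sylow_closure_def
proof (rule Inter_greatest)
  let ?N = "normalizer G P"
  have N: "subgroup ?N G" using normalizer_imp_subgroup[OF is_p_subgroup_subset[OF P]] .
  have QN: "Q \<subseteq> ?N" and Q_conj: "\<And>x h. x \<in> ?N \<Longrightarrow> h \<in> Q \<Longrightarrow> x \<otimes> h \<otimes> inv x \<in> Q"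
    using Q_normal normal_restrict_iff[OF N] by auto
  fix S assume "S \<in> {S. sylow_p_subgroup G p S \<and> P \<subseteq> S}"
  then have S: "sylow_p_subgroup G p S" and PS: "P \<subseteq> S" by auto
  have SN: "S \<subseteq> ?N" using sylow_p_subgroup_subset_normalizer[OF S PS] .
  obtain T where T: "sylow_p_subgroup (G\<lparr>carrier := ?N\<rparr>) p T" "Q \<subseteq> T"
    using sylow_p_subgroup_restrict_containing[OF prime_p finite_carrier N Q QN] by blast
  obtain x where x: "x \<in> ?N" "conjugate G x T = S"
    using sylow_p_subgroups_restrict_conjugate[OF prime_p finite_carrier N T(1)
        sylow_p_subgroup_restrict[OF prime_p finite_carrier N S SN]] by blast
  have xc: "x \<in> carrier G" using x(1) subgroup.subset[OF N] by blast
  show "Q \<subseteq> S"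
  proof
    fix q assume q: "q \<in> Q"
    have qc: "q \<in> carrier G" using q QN subgroup.subset[OF N] by blast
    have "inv x \<otimes> q \<otimes> x \<in> T"
      using Q_conj[OF subgroup.m_inv_closed[OF N x(1)] q] T(2) xc by auto
    then have "x \<otimes> (inv x \<otimes> q \<otimes> x) \<otimes> inv x \<in> S"
      using x(2) xc by (auto simp: conjugate_eq_image)
    then show "q \<in> S" using xc qc by (simp add: m_assoc)
  qed
qed

lemma Op_normalizer_eq_sylow_closure:
  assumes P: "is_p_subgroup G p P"
  shows "Op G p (normalizer G P) = sylow_closure G p P"
  unfolding Op_def
proof (rule the_equality)
  show "is_p_subgroup G p (sylow_closure G p P) \<and> sylow_closure G p P \<lhd> G\<lparr>carrier := normalizer G P\<rparr> \<and>
      (\<forall>Q. is_p_subgroup G p Q \<and> Q \<lhd> G\<lparr>carrier := normalizer G P\<rparr> \<longrightarrow> Q \<subseteq> sylow_closure G p P)"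
    using is_p_subgroup_sylow_closure[OF prime_p finite_carrier P] normal_sylow_closure[OF P]
      normal_p_subgroup_subset_sylow_closure[OF P] by blast
  show "Q = sylow_closure G p P"
    if "is_p_subgroup G p Q \<and> Q \<lhd> G\<lparr>carrier := normalizer G P\<rparr> \<and>
      (\<forall>Q'. is_p_subgroup G p Q' \<and> Q' \<lhd> G\<lparr>carrier := normalizer G P\<rparr> \<longrightarrow> Q' \<subseteq> Q)" for Q
    using that normal_p_subgroup_subset_sylow_closure[OF P]
      is_p_subgroup_sylow_closure[OF prime_p finite_carrier P] normal_sylow_closure[OF P]
    by (meson subset_antisym)
qed

lemma Bp_iff: "P \<in> Bp G p \<longleftrightarrow> P \<in> Sp G p \<and> sylow_closure G p P = P"
  using Op_normalizer_eq_sylow_closure unfolding Bp_def Sp_def by auto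

lemma sylow_closure_in_Sp:
  assumes P: "P \<in> Sp G p"
  shows "sylow_closure G p P \<in> Sp G p"
proof -
  have "is_p_subgroup G p P" "P \<noteq> {\<one>}" "\<one> \<in> P"
    using P subgroup.one_closed by (auto simp: Sp_def is_p_subgroup_def)
  then show ?thesis
    using is_p_subgroup_sylow_closure[OF prime_p finite_carrier] sylow_closure_ge[of P G p]
    by (auto simp: Sp_def)
qed

lemma sylow_closure_in_Bp: "P \<in> Sp G p \<Longrightarrow> sylow_closure G p P \<in> Bp G p"
  using sylow_closure_in_Sp Bp_iff by simp

lemma Bp_strong_deformation_retract: "strong_deformation_retract (subgroup_space (Sp G p)) (Bp G p)"
  unfolding strong_deformation_retract_def subgroup_space_def topspace_poset_topology
proof (intro conjI exI[of _ "sylow_closure G p"])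
  show "Bp G p \<subseteq> Sp G p" unfolding Bp_def by blast
  show "continuous_map (poset_topology (Sp G p) (\<subseteq>))
      (subtopology (poset_topology (Sp G p) (\<subseteq>)) (Bp G p)) (sylow_closure G p)"
    by (intro continuous_map_into_subtopology continuous_map_poset_topologyI)
      (simp_all add: image_subset_iff sylow_closure_in_Sp sylow_closure_in_Bp sylow_closure_mono)
  show "\<forall>x\<in>Bp G p. sylow_closure G p x = x" using Bp_iff by blast
  show "homotopic_with (\<lambda>h. \<forall>x\<in>Bp G p. h x = x) (poset_topology (Sp G p) (\<subseteq>))
      (poset_topology (Sp G p) (\<subseteq>)) id (sylow_closure G p)"
    by (rule homotopic_with_poset_topology_le)
      (simp_all add: Bp_iff sylow_closure_in_Sp sylow_closure_mono sylow_closure_ge)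
qed

lemma conjugation_closed_Bp: "conjugation_closed G (Bp G p)"
proof (rule conjugation_closedI)
  show "subgroup Q G" if "Q \<in> Bp G p" for Q
    using that by (simp add: Bp_def Sp_def is_p_subgroup_def)
  show "conjugate G g Q \<in> Bp G p" if g: "g \<in> carrier G" and Q: "Q \<in> Bp G p" for g Q
  proof -
    have "Q \<in> Sp G p" "is_p_subgroup G p Q" "sylow_closure G p Q = Q"
      using Q Bp_iff by (auto simp: Sp_def)
    then show ?thesis
      by (simp add: Bp_iff Sp_conjugate[OF g] sylow_closure_conjugate[OF prime_p finite_carrier g])
  qed
qed

lemma contractible_orbit_space_Bp:
  assumes dvd: "p dvd order G"
  shows "contractible_space (orbit_space G (Bp G p))"
proof -
  obtain S where S: "sylow_p_subgroup G p S"
    using sylow_p_subgroup_exists[OF prime_p finite_carrier] by blast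
  have S_p: "is_p_subgroup G p S" using sylow_p_subgroup_is_p_subgroup[OF S] .
  interpret controlled_fusion G "Bp G p" "Bp G p" "\<lambda>Q. Q" S
  proof
    show "S \<in> Bp G p"
      using sylow_p_subgroup_in_Sp[OF prime_p finite_carrier dvd S] sylow_closure_subset[OF S subset_refl]
        sylow_closure_ge[of S G p] Bp_iff by blast
    show "\<exists>g\<in>carrier G. conjugate G g Q \<subseteq> S" if "Q \<in> Bp G p" for Q
      using that p_subgroup_conjugate_into_sylow[OF prime_p finite_carrier S] by (simp add: Bp_def Sp_def)
    show "\<exists>n\<in>carrier G. conjugate G n S = S \<and> (\<forall>Q. Q \<subseteq> M \<longrightarrow> conjugate G n Q = conjugate G g Q)"
      if "M \<in> Bp G p" "M \<subseteq> S" "g \<in> carrier G" "conjugate G g M \<subseteq> S" for M g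
      by (rule normalizer_controls_fusion[OF prime_p finite_carrier S_p _ _ _ _ that(2-4), where Phi = "\<lambda>T. T"])
        (use sylow_commute[OF S] sylow_p_subgroup_maximal[OF prime_p finite_carrier S] in
          \<open>auto simp: is_p_subgroup_subset\<close>)
  qed (use finite_carrier conjugation_closed_Bp in auto)
  show ?thesis by (rule contractible_orbit_space)
qed
lemma p_subgroup_p_elements_commute:
  assumes P: "is_p_subgroup G p P"
  shows "p_elements_commute G p P"
proof -
  obtain S where "sylow_p_subgroup G p S" "P \<subseteq> S"
    using sylow_p_subgroup_containing[OF prime_p finite_carrier P] by blast
  then show ?thesis using sylow_commute unfolding p_elements_commute_def by blast
qed

end

theorem proposition5p1:
  fixes G :: "('g, 'b) monoid_scheme" and p :: nat
  assumes "group G" and "finite (carrier G)" and "prime p" and "p dvd order G"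
  shows "(strong_deformation_retract (subgroup_space (Sp G p)) (Ap G p) \<longrightarrow>
            contractible_space (orbit_space G (Ap G p)) \<and>
            contractible_space (orbit_space G (Sp G p)))
       \<and> ((\<forall>P. sylow_p_subgroup G p P \<longrightarrow> (\<forall>x\<in>P. \<forall>y\<in>P. x \<otimes>\<^bsub>G\<^esub> y = y \<otimes>\<^bsub>G\<^esub> x)) \<longrightarrow>
            contractible_space (orbit_space G (Ap G p)) \<and>
            contractible_space (orbit_space G (Sp G p)) \<and>
            strong_deformation_retract (subgroup_space (Sp G p)) (Bp G p) \<and>
            contractible_space (orbit_space G (Bp G p)))"
proof -
  interpret group G by (fact assms(1))
  note fin = assms(2) and p = assms(3) and dvd = assms(4)
  have "contractible_space (orbit_space G (Ap G p)) \<and> contractible_space (orbit_space G (Sp G p))"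
    if "strong_deformation_retract (subgroup_space (Sp G p)) (Ap G p)"
    using contractible_orbit_spaces_Ap_Sp[OF p fin dvd Ap_sdr_imp_p_elements_commute[OF p that]] by blast
  moreover have "contractible_space (orbit_space G (Ap G p)) \<and> contractible_space (orbit_space G (Sp G p)) \<and>
      strong_deformation_retract (subgroup_space (Sp G p)) (Bp G p) \<and> contractible_space (orbit_space G (Bp G p))"
    if "\<forall>P. sylow_p_subgroup G p P \<longrightarrow> (\<forall>x\<in>P. \<forall>y\<in>P. x \<otimes>\<^bsub>G\<^esub> y = y \<otimes>\<^bsub>G\<^esub> x)"
  proof -
    interpret abelian_sylow G p by unfold_locales (use p fin that in blast)+
    show ?thesis
      using contractible_orbit_spaces_Ap_Sp[OF p fin dvd p_subgroup_p_elements_commute]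
        Bp_strong_deformation_retract contractible_orbit_space_Bp[OF dvd] by blast
  qed
  ultimately show ?thesis by blast
qed

end
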